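(* Let $N\geqslant 2$, $1<p<N$, $p<q<p+\frac{p^2}{N}$, $a,\mu>0$ with $\mu a^{q(1-\gamma_{q})}<\alpha(N,p,q)$, and let $R_0$ be as below. Then \[m^{+}(a,\mu)=\inf_{u\in A_{R_{0}}}E_{\mu}(u)<0<m^{-}(a,\mu),\] where $A_{R_0}=\{u\in S_a:\lVert\nabla u\rVert_p\leqslant R_0\}$.
   Context: $p^*=\frac{Np}{N-p}$, $\gamma_{q}=\frac{N(q-p)}{pq}$, $S_{a}=\{u\in W^{1,p}(\mathbb{R}^N):\lVert u\rVert_{p}^p=a^p\}$. $E_{\mu}(u)=\frac1p\lVert\nabla u\rVert_p^p-\frac{\mu}{q}\lVert u\rVert_q^q-\frac{1}{p^*}\lVert u\rVert_{p^*}^{p^*}$, $P_\mu(u)=\lVert\nabla u\rVert_p^p-\mu\gamma_q\lVert u\rVert_q^q-\lVert u\rVert_{p^*}^{p^*}$, $\mathcal{P}_{a,\mu}^{\pm}=\{u\in S_a:P_\mu(u)=0,\ \pm(p\lVert\nabla u\rVert_p^p-\mu q\gamma_q^2\lVert u\rVert_q^q-p^*\lVert u\rVert_{p^*}^{p^*})>0\}$, $m^{\pm}(a,\mu)=\inf_{\mathcal{P}^{\pm}_{a,\mu}}E_\mu$. $S$, $C_{N,p,q}$ are the optimal Sobolev and Gagliardo–Nirenberg ($\lVert u\rVert_q^q\leqslant C_{N,p,q}\lVert\nabla u\rVert_p^{q\gamma_q}\lVert u\rVert_p^{q(1-\gamma_q)}$) constants; $\alpha(N,p,q)=\min\{C',C''\}$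 with $C'=\Big(\frac{p^*S^{p^*/p}(p-q\gamma_{q})}{p(p^*-q\gamma_{q})}\Big)^{\frac{p-q\gamma_{q}}{p^*-p}}\frac{q(p^*-p)}{pC_{N,p,q}(p^*-q\gamma_{q})}$, $C''=\frac{pp^*}{N\gamma_{q}C_{N,p,q}(p^*-p)}\Big(\frac{q\gamma_{q}S^{N/p}}{p-q\gamma_{q}}\Big)^{\frac{p-q\gamma_{q}}{p}}$. $R_0$ is the smaller of the two positive zeros $R_0<R_1$ of $h(t)=\frac1pt^p-\frac{\mu}{q}C_{N,p,q}a^{q(1-\gamma_q)}t^{q\gamma_q}-\frac{1}{p^*S^{p^*/p}}t^{p^*}$. *)

theory Defs
  imports "HOL-Analysis.Analysis"
begin

definition partial_deriv :: "'n::finite \<Rightarrow> (real^'n \<Rightarrow> real) \<Rightarrow> real^'n \<Rightarrow> real" where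
  "partial_deriv i f x = deriv (\<lambda>t. f (x + t *\<^sub>R axis i 1)) 0"

primrec iter_partial :: "'n::finite list \<Rightarrow> (real^'n \<Rightarrow> real) \<Rightarrow> real^'n \<Rightarrow> real" where
  "iter_partial [] f = f"
| "iter_partial (i # is) f = partial_deriv i (iter_partial is f)"

definition smooth_fun :: "(real^'n::finite \<Rightarrow> real) \<Rightarrow> bool" where
  "smooth_fun f \<longleftrightarrow> (\<forall>is x. iter_partial is f differentiable (at x))"

definition test_fun :: "(real^'n::finite \<Rightarrow> real) \<Rightarrow> bool" where
  "test_fun f \<longleftrightarrow> smooth_fun f \<and> compact (closure {x. f x \<noteq> 0})"

definition in_Lp :: "real \<Rightarrow> (real^'n::finite \<Rightarrow> real) \<Rightarrow> bool" where
  "in_Lp p u \<longleftrightarrow> u \<in> borel_measurable lborel \<and> integrable lborel (\<lambda>x. \<bar>u x\<bar> powr p)"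

definition Lnorm :: "real \<Rightarrow> (real^'n::finite \<Rightarrow> real) \<Rightarrow> real" where
  "Lnorm p u = (\<integral>x. \<bar>u x\<bar> powr p \<partial>lborel) powr (1 / p)"

definition weak_gradient :: "(real^'n::finite \<Rightarrow> real) \<Rightarrow> (real^'n \<Rightarrow> real^'n) \<Rightarrow> bool" where
  "weak_gradient u g \<longleftrightarrow>
     (\<forall>\<phi> i. test_fun \<phi> \<longrightarrow>
        integrable lborel (\<lambda>x. u x * partial_deriv i \<phi> x) \<and>
        integrable lborel (\<lambda>x. g x $ i * \<phi> x) \<and>
        (\<integral>x. u x * partial_deriv i \<phi> x \<partial>lborel) = - (\<integral>x. g x $ i * \<phi> x \<partial>lborel))"

definition W1p :: "real \<Rightarrow> (real^'n::finite \<Rightarrow> real) \<Rightarrow> bool" where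
  "W1p p u \<longleftrightarrow> in_Lp p u \<and>
     (\<exists>g. weak_gradient u g \<and> g \<in> borel_measurable lborel \<and>
          integrable lborel (\<lambda>x. norm (g x) powr p))"

definition grad :: "real \<Rightarrow> (real^'n::finite \<Rightarrow> real) \<Rightarrow> real^'n \<Rightarrow> real^'n" where
  "grad p u = (SOME g. weak_gradient u g \<and> g \<in> borel_measurable lborel \<and>
                       integrable lborel (\<lambda>x. norm (g x) powr p))"

definition gnorm :: "real \<Rightarrow> (real^'n::finite \<Rightarrow> real) \<Rightarrow> real" where
  "gnorm p u = (\<integral>x. norm (grad p u x) powr p \<partial>lborel) powr (1 / p)"

definition crit_exp :: "nat \<Rightarrow> real \<Rightarrow> real" where
  "crit_exp N p = real N * p / (real N - p)"

definition gamma_q :: "nat \<Rightarrow> real \<Rightarrow> real \<Rightarrow> real" where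
  "gamma_q N p q = real N * (q - p) / (p * q)"

definition sobolev_const :: "'n::finite itself \<Rightarrow> real \<Rightarrow> real" where
  "sobolev_const (_ :: 'n itself) p =
     Inf {gnorm p u powr p / Lnorm (crit_exp CARD('n) p) u powr p
          | u :: real^'n \<Rightarrow> real. W1p p u \<and> \<not> (AE x in lborel. u x = 0)}"

definition GN_const :: "'n::finite itself \<Rightarrow> real \<Rightarrow> real \<Rightarrow> real" where
  "GN_const (_ :: 'n itself) p q =
     Sup {Lnorm q u powr q /
            (gnorm p u powr (q * gamma_q CARD('n) p q) *
             Lnorm p u powr (q * (1 - gamma_q CARD('n) p q)))
          | u :: real^'n \<Rightarrow> real. W1p p u \<and> \<not> (AE x in lborel. u x = 0)}"

definition alpha_const :: "'n::finite itself \<Rightarrow> real \<Rightarrow> real \<Rightarrow> real" where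
  "alpha_const T p q =
    (let N = CARD('n); ps = crit_exp N p; g = gamma_q N p q;
         S = sobolev_const T p; C = GN_const T p q;
         C1 = (ps * S powr (ps / p) * (p - q * g) / (p * (ps - q * g))) powr ((p - q * g) / (ps - p))
              * (q * (ps - p)) / (p * C * (ps - q * g));
         C2 = (p * ps) / (real N * g * C * (ps - p))
              * (q * g * S powr (real N / p) / (p - q * g)) powr ((p - q * g) / p)
     in min C1 C2)"

definition Sa :: "'n::finite itself \<Rightarrow> real \<Rightarrow> real \<Rightarrow> (real^'n \<Rightarrow> real) set" where
  "Sa _ p a = {u. W1p p u \<and> Lnorm p u powr p = a powr p}"

definition energy :: "'n::finite itself \<Rightarrow> real \<Rightarrow> real \<Rightarrow> real \<Rightarrow> (real^'n \<Rightarrow> real) \<Rightarrow> real" where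
  "energy _ p q \<mu> u = (let ps = crit_exp CARD('n) p in
     1 / p * gnorm p u powr p - \<mu> / q * Lnorm q u powr q - 1 / ps * Lnorm ps u powr ps)"

definition pohozaev :: "'n::finite itself \<Rightarrow> real \<Rightarrow> real \<Rightarrow> real \<Rightarrow> (real^'n \<Rightarrow> real) \<Rightarrow> real" where
  "pohozaev _ p q \<mu> u = (let ps = crit_exp CARD('n) p in
     gnorm p u powr p - \<mu> * gamma_q CARD('n) p q * Lnorm q u powr q - Lnorm ps u powr ps)"

definition pohozaev_second :: "'n::finite itself \<Rightarrow> real \<Rightarrow> real \<Rightarrow> real \<Rightarrow> (real^'n \<Rightarrow> real) \<Rightarrow> real" where
  "pohozaev_second _ p q \<mu> u = (let ps = crit_exp CARD('n) p in
     p * gnorm p u powr p - \<mu> * q * (gamma_q CARD('n) p q)\<^sup>2 * Lnorm q u powr q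
     - ps * Lnorm ps u powr ps)"

definition P_plus :: "'n::finite itself \<Rightarrow> real \<Rightarrow> real \<Rightarrow> real \<Rightarrow> real \<Rightarrow> (real^'n \<Rightarrow> real) set" where
  "P_plus T p q a \<mu> = {u \<in> Sa T p a. pohozaev T p q \<mu> u = 0 \<and> pohozaev_second T p q \<mu> u > 0}"

definition P_minus :: "'n::finite itself \<Rightarrow> real \<Rightarrow> real \<Rightarrow> real \<Rightarrow> real \<Rightarrow> (real^'n \<Rightarrow> real) set" where
  "P_minus T p q a \<mu> = {u \<in> Sa T p a. pohozaev T p q \<mu> u = 0 \<and> pohozaev_second T p q \<mu> u < 0}"

definition m_plus :: "'n::finite itself \<Rightarrow> real \<Rightarrow> real \<Rightarrow> real \<Rightarrow> real \<Rightarrow> real" where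
  "m_plus T p q a \<mu> = Inf (energy T p q \<mu> ` P_plus T p q a \<mu>)"

definition m_minus :: "'n::finite itself \<Rightarrow> real \<Rightarrow> real \<Rightarrow> real \<Rightarrow> real \<Rightarrow> real" where
  "m_minus T p q a \<mu> = Inf (energy T p q \<mu> ` P_minus T p q a \<mu>)"

definition h_fun :: "'n::finite itself \<Rightarrow> real \<Rightarrow> real \<Rightarrow> real \<Rightarrow> real \<Rightarrow> real \<Rightarrow> real" where
  "h_fun T p q a \<mu> t = (let N = CARD('n); ps = crit_exp N p; g = gamma_q N p q in
     1 / p * t powr p - \<mu> / q * GN_const T p q * a powr (q * (1 - g)) * t powr (q * g)
     - 1 / (ps * sobolev_const T p powr (ps / p)) * t powr ps)"

definition R0 :: "'n::finite itself \<Rightarrow> real \<Rightarrow> real \<Rightarrow> real \<Rightarrow> real \<Rightarrow> real" where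
  "R0 T p q a \<mu> = Inf {t. t > 0 \<and> h_fun T p q a \<mu> t = 0}"

definition A_R :: "'n::finite itself \<Rightarrow> real \<Rightarrow> real \<Rightarrow> real \<Rightarrow> (real^'n \<Rightarrow> real) set" where
  "A_R T p a R = {u \<in> Sa T p a. gnorm p u \<le> R}"

end

theory Submission
  imports Defs "HOL-Computational_Algebra.Polynomial"
begin

(* Along the mass-preserving dilations s \<star> u(x) = s^(N/p) u(s x) of a function u on the sphere S_a,
   the energy is \<Psi>_u(s) = A s^p / p - \<mu> B s^(q \<gamma>_q) / q - D s^{p*} / p* with q \<gamma>_q < p < p*,
   and s^(q \<gamma>_q) (k_u(s) - \<mu> \<gamma>_q B) is the Pohozaev functional of s \<star> u, where k_u increases
   and then decreases. So a fibre meets P^+ exactly at the local minimum of \<Psi>_u and P^- at its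
   global maximum. The Gagliardo-Nirenberg and Sobolev inequalities give \<Psi>_u(s) \<ge> h(s \<parallel>\<nabla>u\<parallel>_p),
   and the smallness of \<mu> a^(q (1 - \<gamma>_q)) makes h positive at some t_0 between its zeros
   R_0 < R_1. Hence points of P^+ have \<parallel>\<nabla>u\<parallel>_p < R_0 and negative energy, points of P^- have
   energy at least h(t_0) > 0, and every u with \<parallel>\<nabla>u\<parallel>_p \<le> R_0 has a dilate in P^+ of no larger
   energy, which gives m^+ = inf E(A_R0) < 0 < m^-.
   The optimal constants are never computed: \<alpha>(N,p,q) > 0 forces S > 0 and C > 0, and C is finite
   by interpolating L^q between L^p and L^{p*}. Computing \<parallel>\<nabla>(s \<star> u)\<parallel>_p needs uniqueness of weak
   gradients, which follows by testing against smooth cut-offs of boxes. *)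

lemma weighted_geometric_le_arithmetic_mean:
  fixes x y l :: real
  assumes "0 \<le> x" "0 \<le> y" "0 \<le> l" "l \<le> 1"
  shows "x powr l * y powr (1 - l) \<le> l * x + (1 - l) * y"
proof (cases "x = 0 \<or> y = 0")
  case True
  then show ?thesis using assms by auto
next
  case False
  then show ?thesis using Youngs_inequality_0[of l "1 - l" x y] assms by auto
qed

lemma integrable_powr_interpolation:
  fixes f g :: "'a \<Rightarrow> real"
  assumes "f \<in> borel_measurable M" "g \<in> borel_measurable M"
    and f0: "\<And>x. 0 \<le> f x" and g0: "\<And>x. 0 \<le> g x"
    and "integrable M f" "integrable M g" and "0 < l" "l < 1"
  shows "integrable M (\<lambda>x. f x powr l * g x powr (1 - l))"
proof (rule Bochner_Integration.integrable_bound)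
  show "integrable M (\<lambda>x. l * f x + (1 - l) * g x)" using assms by auto
  show "AE x in M. norm (f x powr l * g x powr (1 - l)) \<le> norm (l * f x + (1 - l) * g x)"
    using weighted_geometric_le_arithmetic_mean[OF f0 g0] f0 g0 assms by (intro AE_I2) auto
qed (use assms in simp)

lemma integral_powr_interpolation_le:
  fixes f g :: "'a \<Rightarrow> real"
  assumes "f \<in> borel_measurable M" "g \<in> borel_measurable M"
    and f0: "\<And>x. 0 \<le> f x" and g0: "\<And>x. 0 \<le> g x"
    and fi: "integrable M f" and gi: "integrable M g" and l: "0 < l" "l < 1"
  shows "(\<integral>x. f x powr l * g x powr (1 - l) \<partial>M) \<le> (\<integral>x. f x \<partial>M) powr l * (\<integral>x. g x \<partial>M) powr (1 - l)"
proof -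
  define F where "F = (\<integral>x. f x \<partial>M)"
  define G where "G = (\<integral>x. g x \<partial>M)"
  have F0: "0 \<le> F" and G0: "0 \<le> G" unfolding F_def G_def using f0 g0 by (simp_all add: integral_nonneg)
  show "(\<integral>x. f x powr l * g x powr (1 - l) \<partial>M) \<le> F powr l * G powr (1 - l)"
  proof (cases "F = 0 \<or> G = 0")
    case True
    then have "(AE x in M. f x = 0) \<or> (AE x in M. g x = 0)"
      using integral_nonneg_eq_0_iff_AE[OF fi] integral_nonneg_eq_0_iff_AE[OF gi] f0 g0
      unfolding F_def G_def by auto
    then have "AE x in M. f x powr l * g x powr (1 - l) = 0"
      by (auto elim!: eventually_mono)
    then show ?thesis by (simp add: integral_eq_zero_AE)
  next
    case False
    then have Fp: "0 < F" and Gp: "0 < G" using F0 G0 by auto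
    \<comment> \<open>normalise both integrals to 1 and integrate the pointwise AM-GM inequality\<close>
    have "(\<integral>x. (f x powr l * g x powr (1 - l)) / (F powr l * G powr (1 - l)) \<partial>M)
        \<le> (\<integral>x. l * (f x / F) + (1 - l) * (g x / G) \<partial>M)"
    proof (intro integral_mono)
      fix x
      have "(f x powr l * g x powr (1 - l)) / (F powr l * G powr (1 - l))
          = (f x / F) powr l * (g x / G) powr (1 - l)"
        using f0 g0 Fp Gp by (simp add: powr_divide)
      also have "\<dots> \<le> l * (f x / F) + (1 - l) * (g x / G)"
        using weighted_geometric_le_arithmetic_mean[of "f x / F" "g x / G" l] f0 g0 Fp Gp l by simp
      finally show "(f x powr l * g x powr (1 - l)) / (F powr l * G powr (1 - l))
          \<le> l * (f x / F) + (1 - l) * (g x / G)" .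
    qed (use integrable_powr_interpolation[OF assms] fi gi in auto)
    also have "\<dots> = 1"
      using fi gi Fp Gp unfolding F_def G_def by simp
    finally show ?thesis using Fp Gp by (simp add: divide_le_eq)
  qed
qed

section \<open>Fibre maps\<close>

definition two_powers :: "real \<Rightarrow> real \<Rightarrow> real \<Rightarrow> real \<Rightarrow> real \<Rightarrow> real \<Rightarrow> real" where
  "two_powers a1 a2 a3 A D s = A * s powr (a1 - a2) - D * s powr (a3 - a2)"

definition two_powers_argmax :: "real \<Rightarrow> real \<Rightarrow> real \<Rightarrow> real \<Rightarrow> real \<Rightarrow> real" where
  "two_powers_argmax a1 a2 a3 A D = ((a1 - a2) * A / ((a3 - a2) * D)) powr (1 / (a3 - a1))"

definition three_powers :: "real \<Rightarrow> real \<Rightarrow> real \<Rightarrow> real \<Rightarrow> real \<Rightarrow> real \<Rightarrow> real \<Rightarrow> real" where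
  "three_powers a1 a2 a3 A M D s = A / a1 * s powr a1 - M / a2 * s powr a2 - D / a3 * s powr a3"

text \<open>\<open>Phi\<close> is the energy along a fibre \<open>s \<mapsto> s \<star> u\<close> (with \<open>a1 = p\<close>, \<open>a2 = q \<gamma>\<^sub>q\<close>, \<open>a3 = p\<^sup>*\<close>),
  and \<open>s\<^sup>a\<^sup>2 (k s - M)\<close> is the Pohozaev functional of \<open>s \<star> u\<close>.\<close>

locale power_fiber =
  fixes a1 a2 a3 A M D :: real
  assumes a2: "0 < a2" and a12: "a2 < a1" and a13: "a1 < a3"
    and A: "0 < A" and D: "0 < D" and M: "0 \<le> M"
begin

abbreviation k :: "real \<Rightarrow> real" where
  "k \<equiv> two_powers a1 a2 a3 A D"

abbreviation Phi :: "real \<Rightarrow> real" where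
  "Phi \<equiv> three_powers a1 a2 a3 A M D"

abbreviation s0 :: real where
  "s0 \<equiv> two_powers_argmax a1 a2 a3 A D"

lemma k_eq: "k s = A * s powr (a1 - a2) - D * s powr (a3 - a2)"
  by (simp add: two_powers_def)

lemma Phi_eq: "Phi s = A / a1 * s powr a1 - M / a2 * s powr a2 - D / a3 * s powr a3"
  by (simp add: three_powers_def)

lemma s0_eq: "s0 = ((a1 - a2) * A / ((a3 - a2) * D)) powr (1 / (a3 - a1))"
  by (simp add: two_powers_argmax_def)

lemma s0_pos: "0 < s0"
  unfolding s0_eq using a2 a12 a13 A D by simp

lemma k_zero: "k 0 = 0"
  unfolding k_eq using a12 a13 by simp

lemma Phi_zero: "Phi 0 = 0"
  unfolding Phi_eq using a2 a12 a13 by simp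

lemma continuous_on_k: "continuous_on {0..} k"
  unfolding two_powers_def[abs_def] using a12 a13
  by (intro continuous_intros continuous_on_powr') auto

lemma continuous_on_Phi: "continuous_on {0..} Phi"
  unfolding three_powers_def[abs_def] using a2 a12 a13
  by (intro continuous_intros continuous_on_powr') auto

lemma k_has_derivative:
  assumes "0 < s"
  shows "(k has_real_derivative
     s powr (a1 - a2 - 1) * ((a1 - a2) * A - (a3 - a2) * D * s powr (a3 - a1))) (at s)"
proof -
  have "(k has_real_derivative
      A * ((a1 - a2) * s powr (a1 - a2 - 1)) - D * ((a3 - a2) * s powr (a3 - a2 - 1))) (at s)"
    unfolding two_powers_def[abs_def]
    by (intro derivative_eq_intros has_real_derivative_powr assms) auto
  moreover have "s powr (a3 - a2 - 1) = s powr (a1 - a2 - 1) * s powr (a3 - a1)"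
    using assms by (simp add: powr_add[symmetric] algebra_simps)
  ultimately show ?thesis by (simp add: algebra_simps)
qed

lemma Phi_has_derivative:
  assumes "0 < s"
  shows "(Phi has_real_derivative s powr (a2 - 1) * (k s - M)) (at s)"
proof -
  have "(Phi has_real_derivative A / a1 * (a1 * s powr (a1 - 1)) - M / a2 * (a2 * s powr (a2 - 1))
      - D / a3 * (a3 * s powr (a3 - 1))) (at s)"
    unfolding three_powers_def[abs_def]
    by (intro derivative_eq_intros has_real_derivative_powr assms) auto
  moreover have "s powr (a1 - 1) = s powr (a2 - 1) * s powr (a1 - a2)"
    "s powr (a3 - 1) = s powr (a2 - 1) * s powr (a3 - a2)"
    using assms by (simp_all add: powr_add[symmetric])
  ultimately show ?thesis using a2 a12 a13 by (simp add: k_eq algebra_simps)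
qed

lemma s0_powr: "s0 powr (a3 - a1) = (a1 - a2) * A / ((a3 - a2) * D)"
  unfolding s0_eq using a12 a13 A D by (simp add: powr_powr)

lemma s0_less_iff_powr: "0 < s \<Longrightarrow> s < t \<longleftrightarrow> s powr (a3 - a1) < t powr (a3 - a1)" if "0 < t" for t
  using that a13 by (meson diff_gt_0_iff_gt less_imp_le powr_less_cancel2 powr_less_mono2)

lemma below_s0_iff:
  assumes "0 < s"
  shows "(a3 - a2) * D * s powr (a3 - a1) < (a1 - a2) * A \<longleftrightarrow> s < s0"
  using s0_less_iff_powr[OF s0_pos assms] a12 a13 D
  by (simp add: s0_powr pos_less_divide_eq mult.commute mult.left_commute)

lemma above_s0_iff:
  assumes "0 < s"
  shows "(a1 - a2) * A < (a3 - a2) * D * s powr (a3 - a1) \<longleftrightarrow> s0 < s"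
  using s0_less_iff_powr[OF assms s0_pos] a12 a13 D
  by (simp add: s0_powr divide_less_eq mult.commute mult.left_commute)

lemma k_strict_mono_below_s0:
  assumes "0 \<le> x" "x < y" "y \<le> s0"
  shows "k x < k y"
proof (rule DERIV_pos_imp_increasing_open[OF assms(2)])
  fix z assume z: "x < z" "z < y"
  then have z0: "0 < z" and "z < s0" using assms by auto
  then show "\<exists>y. DERIV k z :> y \<and> 0 < y"
    using k_has_derivative[OF z0] below_s0_iff[OF z0]
    by (intro exI[of _ "z powr (a1 - a2 - 1) * ((a1 - a2) * A - (a3 - a2) * D * z powr (a3 - a1))"]) auto
qed (use assms in \<open>auto intro: continuous_on_subset[OF continuous_on_k]\<close>)

lemma k_strict_antimono_above_s0:
  assumes "s0 \<le> x" "x < y"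
  shows "k y < k x"
proof -
  have "- k x < - k y"
  proof (rule DERIV_pos_imp_increasing_open[OF assms(2)])
    fix z assume z: "x < z" "z < y"
    then have z0: "0 < z" and "s0 < z" using assms s0_pos by auto
    then have "0 < (a3 - a2) * D * z powr (a3 - a1) - (a1 - a2) * A"
      using above_s0_iff[OF z0] by simp
    then show "\<exists>y. DERIV (\<lambda>x. - k x) z :> y \<and> 0 < y"
      using DERIV_minus[OF k_has_derivative[OF z0]] z0
      by (intro exI[of _ "- (z powr (a1 - a2 - 1) * ((a1 - a2) * A - (a3 - a2) * D * z powr (a3 - a1)))"]) (auto simp: mult_pos_neg)
  qed (use assms s0_pos in \<open>auto intro!: continuous_intros continuous_on_subset[OF continuous_on_k]\<close>)
  then show ?thesis by simp
qed

lemma k_le_k_s0: "0 \<le> x \<Longrightarrow> k x \<le> k s0"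
  using k_strict_mono_below_s0[of x s0] k_strict_antimono_above_s0[of s0 x]
  by (cases x s0 rule: linorder_cases) auto

lemma Phi_mono_if_k_ge:
  assumes "0 \<le> x" "x \<le> y" "\<And>z. x < z \<Longrightarrow> z < y \<Longrightarrow> M \<le> k z"
  shows "Phi x \<le> Phi y"
proof (rule DERIV_nonneg_imp_increasing_open[OF assms(2)])
  fix z assume z: "x < z" "z < y"
  then have z0: "0 < z" using assms by simp
  then show "\<exists>y. DERIV Phi z :> y \<and> 0 \<le> y"
    using Phi_has_derivative[OF z0] assms(3)[OF z] by (intro exI[of _ "z powr (a2 - 1) * (k z - M)"]) auto
qed (use assms in \<open>auto intro: continuous_on_subset[OF continuous_on_Phi]\<close>)

lemma Phi_antimono_if_k_le:
  assumes "0 \<le> x" "x \<le> y" "\<And>z. x < z \<Longrightarrow> z < y \<Longrightarrow> k z \<le> M"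
  shows "Phi y \<le> Phi x"
proof (rule DERIV_nonpos_imp_decreasing_open[OF assms(2)])
  fix z assume z: "x < z" "z < y"
  then have z0: "0 < z" using assms by simp
  then show "\<exists>y. DERIV Phi z :> y \<and> y \<le> 0"
    using Phi_has_derivative[OF z0] assms(3)[OF z]
    by (intro exI[of _ "z powr (a2 - 1) * (k z - M)"]) (auto simp: mult_nonneg_nonpos)
qed (use assms in \<open>auto intro: continuous_on_subset[OF continuous_on_Phi]\<close>)

lemma Phi_strict_antimono_if_k_less:
  assumes "0 \<le> x" "x < y" "\<And>z. x < z \<Longrightarrow> z < y \<Longrightarrow> k z < M"
  shows "Phi y < Phi x"
proof (rule DERIV_neg_imp_decreasing_open[OF assms(2)])
  fix z assume z: "x < z" "z < y"
  then have z0: "0 < z" using assms by simp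
  then show "\<exists>y. DERIV Phi z :> y \<and> y < 0"
    using Phi_has_derivative[OF z0] assms(3)[OF z]
    by (intro exI[of _ "z powr (a2 - 1) * (k z - M)"]) (auto simp: mult_pos_neg)
qed (use assms in \<open>auto intro: continuous_on_subset[OF continuous_on_Phi]\<close>)

lemma Phi_neg_if_k_one:
  assumes "k 1 = M" "1 < s0" "0 < s" "s \<le> 1"
  shows "Phi s < 0"
proof -
  have "Phi s < Phi 0"
  proof (rule Phi_strict_antimono_if_k_less)
    fix z assume "0 < z" "z < s"
    then show "k z < M" using assms k_strict_mono_below_s0[of z 1] by auto
  qed (use assms in auto)
  then show ?thesis using Phi_zero by simp
qed

lemma Phi_le_Phi_one_between_s0:
  assumes "k 1 = M" "s0 \<le> x" "x \<le> 1"
  shows "Phi x \<le> Phi 1"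
proof (rule Phi_mono_if_k_ge)
  fix z assume "x < z" "z < 1"
  then show "M \<le> k z" using assms k_strict_antimono_above_s0[of z 1] by auto
qed (use assms s0_pos in auto)

lemma Phi_le_max_zero_Phi_one:
  assumes k1: "k 1 = M" and "s0 < 1" "0 < s"
  shows "Phi s \<le> max 0 (Phi 1)"
proof -
  consider "1 \<le> s" | "s0 \<le> s" "s < 1" | "s < s0" "k s \<le> M" | "s < s0" "M < k s"
    by linarith
  then show ?thesis
  proof cases
    case 1
    have "Phi s \<le> Phi 1"
    proof (rule Phi_antimono_if_k_le)
      fix z assume "1 < z" "z < s"
      then show "k z \<le> M" using assms k_strict_antimono_above_s0[of 1 z] by auto
    qed (use 1 in auto)
    then show ?thesis by simp
  next
    case 2
    then show ?thesis using Phi_le_Phi_one_between_s0[OF k1] by fastforce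
  next
    case 3
    have "Phi s \<le> Phi 0"
    proof (rule Phi_antimono_if_k_le)
      fix z assume "0 < z" "z < s"
      then show "k z \<le> M" using 3 k_strict_mono_below_s0[of z s] by auto
    qed (use assms in auto)
    then show ?thesis using Phi_zero by simp
  next
    case 4
    have "Phi s \<le> Phi s0"
    proof (rule Phi_mono_if_k_ge)
      fix z assume "s < z" "z < s0"
      then show "M \<le> k z" using 4 assms k_strict_mono_below_s0[of s z] by auto
    qed (use assms 4 in auto)
    also have "\<dots> \<le> Phi 1" using Phi_le_Phi_one_between_s0[OF k1] assms by simp
    finally show ?thesis by simp
  qed
qed

lemma M_less_k_s0_if_Phi_pos:
  assumes "0 \<le> t" "0 < Phi t"
  shows "M < k s0"
proof (rule ccontr)
  assume "\<not> M < k s0"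
  then have "k z \<le> M" if "0 < z" for z
    using k_le_k_s0[of z] that by linarith
  then have "Phi t \<le> Phi 0"
    using assms by (intro Phi_antimono_if_k_le) auto
  then show False using Phi_zero assms by simp
qed

lemma k_eq_below_s0:
  assumes "0 < M" "M < k s0"
  obtains s1 where "0 < s1" "s1 < s0" "k s1 = M"
proof -
  have "continuous_on {0..s0} k" by (rule continuous_on_subset[OF continuous_on_k]) auto
  then obtain x where x: "0 \<le> x" "x \<le> s0" "k x = M"
    using IVT'[of k 0 M s0] assms s0_pos k_zero by auto
  moreover have "x \<noteq> 0" "x \<noteq> s0" using x k_zero assms by auto
  ultimately show ?thesis by (intro that[of x]) auto
qed

lemma k_eq_above_s0:
  assumes "M < k s0"
  obtains s2 where "s0 < s2" "k s2 = M"
proof -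
  define T where "T = s0 + (A / D) powr (1 / (a3 - a1)) + 1"
  have T0: "0 < T" "s0 \<le> T" unfolding T_def using s0_pos powr_ge_zero[of "A / D" "1 / (a3 - a1)"] by linarith+
  have "(A / D) powr (1 / (a3 - a1)) < T" unfolding T_def using s0_pos by simp
  then have "((A / D) powr (1 / (a3 - a1))) powr (a3 - a1) < T powr (a3 - a1)"
    using a13 by (intro powr_less_mono2) auto
  then have "A < D * T powr (a3 - a1)"
    using a13 A D by (simp add: powr_powr divide_less_eq mult.commute)
  then have "A * T powr (a1 - a2) < D * T powr (a3 - a1) * T powr (a1 - a2)"
    using T0 by simp
  also have "\<dots> = D * T powr (a3 - a2)"
    using T0 by (simp add: powr_add[symmetric])
  finally have "k T < M" unfolding k_eq using M by simp
  moreover have "continuous_on {s0..T} k"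
    by (rule continuous_on_subset[OF continuous_on_k]) (use s0_pos in auto)
  ultimately obtain x where x: "s0 \<le> x" "x \<le> T" "k x = M"
    using IVT2'[of k T M s0] assms T0 by auto
  moreover have "x \<noteq> s0" using x assms by auto
  ultimately show ?thesis by (intro that[of x]) auto
qed

lemma Phi_le_Phi_one_at_local_min:
  assumes "k s1 = M" "0 < s1" "s1 < s0" "1 \<le> \<rho>" "0 \<le> Phi \<rho>" "Phi s1 < 0"
  shows "Phi s1 \<le> Phi 1"
proof (cases "1 \<le> s1")
  case True
  show ?thesis
  proof (rule Phi_antimono_if_k_le)
    fix z assume "1 < z" "z < s1"
    then show "k z \<le> M" using assms k_strict_mono_below_s0[of z s1] by auto
  qed (use True in auto)
next
  case False
  show ?thesis
  proof (cases "\<forall>z. s1 < z \<and> z < 1 \<longrightarrow> M \<le> k z")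
    case True
    then show ?thesis using False assms by (intro Phi_mono_if_k_ge) auto
  next
    case False
    then obtain z where z: "s1 < z" "z < 1" "k z < M" by (auto simp: not_le)
    have "s0 < z"
      using z assms k_strict_mono_below_s0[of s1 z] by (cases "z \<le> s0") auto
    then have "k w \<le> M" if "1 < w" for w
      using k_strict_antimono_above_s0[of z w] z that by linarith
    then have "Phi \<rho> \<le> Phi 1"
      using assms by (intro Phi_antimono_if_k_le) auto
    then show ?thesis using assms by simp
  qed
qed

end

section \<open>Affine changes of variables and test functions\<close>

lemma
  fixes f :: "'a::euclidean_space \<Rightarrow> real"
  assumes f[measurable]: "f \<in> borel_measurable borel" and c: "c \<noteq> 0"
  shows lborel_integrable_affine_iff: "integrable lborel (\<lambda>x. f (t + c *\<^sub>R x)) \<longleftrightarrow> integrable lborel f"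
    and lborel_integral_affine: "integral\<^sup>L lborel f = \<bar>c\<bar> ^ DIM('a) * (\<integral>x. f (t + c *\<^sub>R x) \<partial>lborel)"
proof -
  let ?T = "\<lambda>x::'a. t + c *\<^sub>R x"
  let ?K = "\<bar>c\<bar> ^ DIM('a)"
  have K0: "0 < ?K" using c by simp
  have eq: "lborel = density (distr lborel borel ?T) (\<lambda>_. ennreal ?K)"
    using lborel_affine[OF c, of t] by simp
  have "integrable lborel f \<longleftrightarrow> integrable (density (distr lborel borel ?T) (\<lambda>_. ennreal ?K)) f"
    by (simp only: eq[symmetric])
  also have "\<dots> \<longleftrightarrow> integrable (distr lborel borel ?T) (\<lambda>x. ?K *\<^sub>R f x)"
    using K0 by (intro integrable_density) auto
  also have "\<dots> \<longleftrightarrow> integrable lborel (\<lambda>x. ?K *\<^sub>R f (?T x))"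
    by (intro integrable_distr_eq) auto
  finally show "integrable lborel (\<lambda>x. f (t + c *\<^sub>R x)) \<longleftrightarrow> integrable lborel f"
    using K0 by simp
  have "integral\<^sup>L lborel f = integral\<^sup>L (density (distr lborel borel ?T) (\<lambda>_. ennreal ?K)) f"
    by (simp only: eq[symmetric])
  also have "\<dots> = integral\<^sup>L (distr lborel borel ?T) (\<lambda>x. ?K *\<^sub>R f x)"
    using K0 by (intro integral_density) auto
  also have "\<dots> = integral\<^sup>L lborel (\<lambda>x. ?K *\<^sub>R f (?T x))"
    by (intro integral_distr) auto
  finally show "integral\<^sup>L lborel f = ?K * (\<integral>x. f (t + c *\<^sub>R x) \<partial>lborel)"
    by simp
qed

lemma
  fixes f :: "real^'n::finite \<Rightarrow> real"
  assumes f: "f \<in> borel_measurable borel" and s: "0 < s"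
  shows lborel_integrable_scale_iff: "integrable lborel (\<lambda>x. f (s *\<^sub>R x)) \<longleftrightarrow> integrable lborel f"
    and lborel_integral_scale:
      "(\<integral>x. f (s *\<^sub>R x) \<partial>lborel) = (\<integral>x. f x \<partial>lborel) / s powr real CARD('n)"
  using lborel_integrable_affine_iff[OF f, of s 0] lborel_integral_affine[OF f, of s 0] s
  by (simp_all add: powr_realpow)

definition smooth_real :: "(real \<Rightarrow> real) \<Rightarrow> bool" where
  "smooth_real f \<longleftrightarrow> (\<forall>k x. (deriv ^^ k) f differentiable (at x))"

lemma smooth_real_derivative_chain:
  assumes "\<And>k x. (F k has_real_derivative F (Suc k) x) (at x)"
  shows "smooth_real (F 0)"
proof -
  have eq: "(deriv ^^ k) (F 0) = F k" for k
  proof (induction k)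
    case (Suc k)
    then show ?case using assms by (auto intro!: ext DERIV_imp_deriv)
  qed simp
  show ?thesis
    unfolding smooth_real_def eq using assms real_differentiable_def by blast
qed

lemma smooth_real_higher_derivative:
  "smooth_real f \<Longrightarrow> ((deriv ^^ k) f has_real_derivative (deriv ^^ Suc k) f x) (at x)"
  unfolding smooth_real_def by (simp add: DERIV_deriv_iff_real_differentiable)

lemma smooth_real_affine:
  assumes "smooth_real f"
  shows "smooth_real (\<lambda>x. f (c * x + d))"
proof -
  define G where "G k x = c ^ k * (deriv ^^ k) f (c * x + d)" for k x
  have "(G k has_real_derivative G (Suc k) x) (at x)" for k x
    unfolding G_def
    by (auto intro!: derivative_eq_intros DERIV_chain2[OF smooth_real_higher_derivative[OF assms]]
        simp: algebra_simps)
  then have "smooth_real (G 0)" by (rule smooth_real_derivative_chain)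
  moreover have "G 0 = (\<lambda>x. f (c * x + d))" by (rule ext) (simp add: G_def)
  ultimately show ?thesis by simp
qed

definition differentiable_up_to :: "nat \<Rightarrow> (real \<Rightarrow> real) \<Rightarrow> bool" where
  "differentiable_up_to n f \<longleftrightarrow> (\<forall>k\<le>n. \<forall>x. (deriv ^^ k) f differentiable (at x))"

lemma smooth_real_iff_differentiable_up_to: "smooth_real f \<longleftrightarrow> (\<forall>n. differentiable_up_to n f)"
  unfolding smooth_real_def differentiable_up_to_def by auto

lemma differentiable_up_to_Suc_imp: "differentiable_up_to (Suc n) f \<Longrightarrow> differentiable_up_to n f"
  unfolding differentiable_up_to_def by auto

lemma differentiable_up_to_deriv:
  "differentiable_up_to (Suc n) f \<Longrightarrow> differentiable_up_to n (deriv f)"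
  unfolding differentiable_up_to_def
  by (metis (no_types) Suc_le_mono funpow_Suc_right comp_apply)

lemma deriv_add_fun:
  fixes f g :: "real \<Rightarrow> real"
  assumes "\<And>x. f differentiable (at x)" "\<And>x. g differentiable (at x)"
  shows "deriv (\<lambda>x. f x + g x) = (\<lambda>x. deriv f x + deriv g x)"
  using assms by (intro ext DERIV_imp_deriv DERIV_add) (auto simp: DERIV_deriv_iff_real_differentiable)

lemma deriv_mult_fun:
  fixes f g :: "real \<Rightarrow> real"
  assumes "\<And>x. f differentiable (at x)" "\<And>x. g differentiable (at x)"
  shows "deriv (\<lambda>x. f x * g x) = (\<lambda>x. deriv f x * g x + f x * deriv g x)"
proof (intro ext DERIV_imp_deriv)
  fix x
  have "(f has_real_derivative deriv f x) (at x)" "(g has_real_derivative deriv g x) (at x)"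
    using assms by (simp_all add: DERIV_deriv_iff_real_differentiable)
  from DERIV_mult[OF this]
  show "((\<lambda>x. f x * g x) has_real_derivative deriv f x * g x + f x * deriv g x) (at x)"
    by (simp add: algebra_simps)
qed

lemma higher_deriv_add_fun:
  assumes "differentiable_up_to n f" "differentiable_up_to n g" "k \<le> Suc n"
  shows "(deriv ^^ k) (\<lambda>x. f x + g x) = (\<lambda>x. (deriv ^^ k) f x + (deriv ^^ k) g x)"
  using assms(3)
proof (induction k)
  case (Suc k)
  then have "\<And>x. (deriv ^^ k) f differentiable (at x)" "\<And>x. (deriv ^^ k) g differentiable (at x)"
    using assms unfolding differentiable_up_to_def by auto
  then show ?case using Suc by (simp add: deriv_add_fun)
qed simp

lemma differentiable_up_to_add:
  assumes "differentiable_up_to n f" "differentiable_up_to n g"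
  shows "differentiable_up_to n (\<lambda>x. f x + g x)"
  unfolding differentiable_up_to_def
proof (intro allI impI)
  fix k x assume "k \<le> n"
  then show "(deriv ^^ k) (\<lambda>x. f x + g x) differentiable at x"
    using higher_deriv_add_fun[OF assms, of k] assms
    unfolding differentiable_up_to_def by (simp add: differentiable_add)
qed

lemma differentiable_up_to_mult:
  "differentiable_up_to n f \<Longrightarrow> differentiable_up_to n g \<Longrightarrow> differentiable_up_to n (\<lambda>x. f x * g x)"
proof (induction n arbitrary: f g)
  case 0
  then show ?case unfolding differentiable_up_to_def by (auto intro!: differentiable_mult)
next
  case (Suc n)
  have df: "\<And>x. f differentiable (at x)" and dg: "\<And>x. g differentiable (at x)"
    using Suc.prems unfolding differentiable_up_to_def by (auto dest: spec[of _ 0])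
  have "differentiable_up_to n (\<lambda>x. deriv f x * g x + f x * deriv g x)"
    using Suc.IH Suc.prems differentiable_up_to_deriv differentiable_up_to_Suc_imp
    by (intro differentiable_up_to_add) blast+
  then have deriv_prod: "differentiable_up_to n (deriv (\<lambda>x. f x * g x))"
    by (simp add: deriv_mult_fun[OF df dg])
  show ?case unfolding differentiable_up_to_def
  proof (intro allI impI)
    fix k x assume "k \<le> Suc n"
    then consider "k = 0" | j where "k = Suc j" "j \<le> n" by (cases k) auto
    then show "(deriv ^^ k) (\<lambda>x. f x * g x) differentiable at x"
    proof cases
      case 1
      then show ?thesis using df dg by (auto intro!: differentiable_mult)
    next
      case 2
      then show ?thesis using deriv_prod unfolding differentiable_up_to_def
        by (simp add: funpow_Suc_right del: funpow.simps)
    qed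
  qed
qed

lemma smooth_real_mult: "smooth_real f \<Longrightarrow> smooth_real g \<Longrightarrow> smooth_real (\<lambda>x. f x * g x)"
  unfolding smooth_real_iff_differentiable_up_to by (auto intro: differentiable_up_to_mult)

definition exp_cutoff :: "real \<Rightarrow> real" where
  "exp_cutoff t = (if 0 < t then exp (- inverse t) else 0)"

text \<open>The \<open>k\<close>-th derivative of \<open>exp_cutoff\<close> is \<open>P\<^sub>k(1/t) exp(-1/t)\<close> for \<open>t > 0\<close>.\<close>

fun exp_cutoff_poly :: "nat \<Rightarrow> real poly" where
  "exp_cutoff_poly 0 = 1"
| "exp_cutoff_poly (Suc k) = [:0, 0, 1:] * (exp_cutoff_poly k - pderiv (exp_cutoff_poly k))"

definition exp_cutoff_deriv :: "nat \<Rightarrow> real \<Rightarrow> real" where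
  "exp_cutoff_deriv k t = (if 0 < t then poly (exp_cutoff_poly k) (inverse t) * exp (- inverse t) else 0)"

lemma poly_times_exp_neg_tendsto_0: "((\<lambda>y. poly Q y * exp (- y)) \<longlongrightarrow> (0::real)) at_top"
proof -
  have "((\<lambda>y. \<Sum>i\<le>degree Q. coeff Q i * (y ^ i / exp y)) \<longlongrightarrow> (\<Sum>i\<le>degree Q. coeff Q i * 0)) at_top"
    by (intro tendsto_sum tendsto_mult tendsto_const tendsto_power_div_exp_0)
  moreover have "poly Q y * exp (- y) = (\<Sum>i\<le>degree Q. coeff Q i * (y ^ i / exp y))" for y :: real
    by (simp add: poly_altdef sum_divide_distrib exp_minus field_simps)
  ultimately show ?thesis by simp
qed

lemma exp_cutoff_deriv_at_0: "(exp_cutoff_deriv k has_real_derivative 0) (at 0)"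
proof -
  have "((\<lambda>h. exp_cutoff_deriv k h / h) \<longlongrightarrow> 0) (at_left 0)"
    by (rule tendsto_eventually, rule eventually_at_leftI[of "-1"]) (auto simp: exp_cutoff_deriv_def)
  moreover have "((\<lambda>h. exp_cutoff_deriv k h / h) \<longlongrightarrow> 0) (at_right 0)"
  proof (rule Lim_transform_eventually)
    show "((\<lambda>h. poly (exp_cutoff_poly k * [:0, 1:]) (inverse h) * exp (- inverse h)) \<longlongrightarrow> 0) (at_right 0)"
      using poly_times_exp_neg_tendsto_0[of "exp_cutoff_poly k * [:0, 1:]"]
      by (simp only: filterlim_at_top_to_right o_def)
    show "\<forall>\<^sub>F h in at_right 0. poly (exp_cutoff_poly k * [:0, 1:]) (inverse h) * exp (- inverse h)
        = exp_cutoff_deriv k h / h"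
      by (rule eventually_at_rightI[of 0 1]) (auto simp: exp_cutoff_deriv_def field_simps)
  qed
  ultimately have "((\<lambda>h. exp_cutoff_deriv k h / h) \<longlongrightarrow> 0) (at 0)"
    by (rule filterlim_split_at)
  then show ?thesis unfolding DERIV_def by (simp add: exp_cutoff_deriv_def)
qed

lemma exp_cutoff_deriv_has_derivative:
  "(exp_cutoff_deriv k has_real_derivative exp_cutoff_deriv (Suc k) t) (at t)"
proof (cases t "0::real" rule: linorder_cases)
  case less
  have "\<forall>\<^sub>F x in nhds t. exp_cutoff_deriv k x = 0"
    using eventually_nhds_in_open[of "{..<0}" t] less
    by (auto elim!: eventually_mono simp: exp_cutoff_deriv_def)
  then show ?thesis
    using less DERIV_cong_ev[OF refl _ refl, of "exp_cutoff_deriv k" "\<lambda>_. 0" t 0]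
    by (simp add: exp_cutoff_deriv_def)
next
  case greater
  let ?P = "exp_cutoff_poly k"
  have "((\<lambda>x. poly ?P (inverse x) * exp (- inverse x)) has_real_derivative
      poly (pderiv ?P) (inverse t) * (- (inverse t * inverse t)) * exp (- inverse t)
      + poly ?P (inverse t) * (exp (- inverse t) * (inverse t * inverse t))) (at t)"
    using greater
    by (auto intro!: derivative_eq_intros DERIV_chain2[OF poly_DERIV] simp: power2_eq_square)
  moreover have "poly (pderiv ?P) (inverse t) * (- (inverse t * inverse t)) * exp (- inverse t)
      + poly ?P (inverse t) * (exp (- inverse t) * (inverse t * inverse t)) = exp_cutoff_deriv (Suc k) t"
    using greater by (simp add: exp_cutoff_deriv_def algebra_simps)
  moreover have ev: "\<forall>\<^sub>F x in nhds t. exp_cutoff_deriv k x = poly ?P (inverse x) * exp (- inverse x)"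
    using eventually_nhds_in_open[of "{0<..}" t] greater
    by (auto elim!: eventually_mono simp: exp_cutoff_deriv_def)
  ultimately show ?thesis
    using DERIV_cong_ev[OF refl ev refl] by simp
next
  case equal
  then show ?thesis using exp_cutoff_deriv_at_0 by (simp add: exp_cutoff_deriv_def)
qed

lemma smooth_exp_cutoff: "smooth_real exp_cutoff"
proof -
  have "exp_cutoff_deriv 0 = exp_cutoff"
    by (simp add: fun_eq_iff exp_cutoff_deriv_def exp_cutoff_def)
  then show ?thesis
    using smooth_real_derivative_chain[of exp_cutoff_deriv, OF exp_cutoff_deriv_has_derivative] by simp
qed

lemma exp_cutoff_nonneg: "0 \<le> exp_cutoff t"
  and exp_cutoff_le_1: "exp_cutoff t \<le> 1"
  and exp_cutoff_pos: "0 < t \<Longrightarrow> 0 < exp_cutoff t"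
  and exp_cutoff_eq_0: "t \<le> 0 \<Longrightarrow> exp_cutoff t = 0"
  by (auto simp: exp_cutoff_def)

lemma exp_cutoff_scaled_tendsto_1:
  assumes "0 < s"
  shows "(\<lambda>n. exp_cutoff (real (Suc n) * s)) \<longlonglongrightarrow> 1"
proof -
  have "(\<lambda>n. inverse (real (Suc n)) * inverse s) \<longlonglongrightarrow> 0 * inverse s"
    by (intro tendsto_mult tendsto_const LIMSEQ_inverse_real_of_nat)
  then have "(\<lambda>n. exp (- inverse (real (Suc n) * s))) \<longlonglongrightarrow> exp (- 0)"
    by (intro tendsto_intros) (simp add: mult.commute)
  then show ?thesis using assms by (simp add: exp_cutoff_def)
qed

lemma has_real_derivative_along_axis:
  fixes F :: "real^'n::finite \<Rightarrow> real"
  assumes "F differentiable (at (y + t0 *\<^sub>R axis i 1))"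
  shows "((\<lambda>t. F (y + t *\<^sub>R axis i 1)) has_real_derivative partial_deriv i F (y + t0 *\<^sub>R axis i 1)) (at t0)"
proof -
  let ?e = "axis i (1::real) :: real^'n"
  obtain F' where F': "(F has_derivative F') (at (y + t0 *\<^sub>R ?e))"
    using assms unfolding differentiable_def by blast
  have lin: "(\<lambda>h. F' (h *\<^sub>R ?e)) = (*) (F' ?e)"
    using linear_simps(5)[OF has_derivative_bounded_linear[OF F']] by (simp add: fun_eq_iff)
  have "((\<lambda>t. F (z + t *\<^sub>R ?e)) has_real_derivative F' ?e) (at t)" if "z + t *\<^sub>R ?e = y + t0 *\<^sub>R ?e" for z t
  proof -
    have "((\<lambda>t. F (z + t *\<^sub>R ?e)) has_derivative (\<lambda>h. F' (h *\<^sub>R ?e))) (at t)"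
      using that by (intro has_derivative_compose[of "\<lambda>t. z + t *\<^sub>R ?e" _ _ _ F])
        (auto intro!: derivative_eq_intros F')
    then show ?thesis unfolding has_field_derivative_def lin .
  qed
  from this[of y t0] this[of "y + t0 *\<^sub>R ?e" 0] show ?thesis
    unfolding partial_deriv_def by (simp add: DERIV_imp_deriv)
qed

lemma has_real_derivative_along_axis_0:
  fixes F :: "real^'n::finite \<Rightarrow> real"
  assumes "F differentiable (at y)"
  shows "((\<lambda>t. F (y + t *\<^sub>R axis i 1)) has_real_derivative partial_deriv i F y) (at 0)"
  using has_real_derivative_along_axis[of F y 0 i] assms by simp

lemma partial_deriv_mult:
  fixes u \<phi> :: "real^'n::finite \<Rightarrow> real"
  assumes "u differentiable (at x)" "\<phi> differentiable (at x)"
  shows "partial_deriv i (\<lambda>x. u x * \<phi> x) x = partial_deriv i u x * \<phi> x + u x * partial_deriv i \<phi> x"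
  unfolding partial_deriv_def[of i "\<lambda>x. u x * \<phi> x"]
  using DERIV_mult[OF has_real_derivative_along_axis_0[OF assms(1)] has_real_derivative_along_axis_0[OF assms(2)], of i i]
  by (subst DERIV_imp_deriv) (auto simp: algebra_simps)

lemma partial_deriv_eq_0_outside_support:
  fixes \<psi> :: "real^'n::finite \<Rightarrow> real"
  assumes dif: "\<And>x. \<psi> differentiable (at x)"
    and supp: "\<And>x. R < norm x \<Longrightarrow> \<psi> x = 0" and x: "R < norm x"
  shows "partial_deriv i \<psi> x = 0"
proof -
  let ?e = "axis i (1::real) :: real^'n"
  have "open {t::real. R < norm (x + t *\<^sub>R ?e)}"
    by (intro open_Collect_less continuous_intros)
  then have "\<forall>\<^sub>F t in nhds 0. t \<in> {t. R < norm (x + t *\<^sub>R ?e)}"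
    using x by (intro eventually_nhds_in_open) auto
  then have "\<forall>\<^sub>F t in nhds 0. \<psi> (x + t *\<^sub>R ?e) = 0"
    by (rule eventually_mono) (simp add: supp)
  then have "((\<lambda>t. \<psi> (x + t *\<^sub>R ?e)) has_real_derivative 0) (at 0)"
    using DERIV_cong_ev[OF refl _ refl, of "\<lambda>t. \<psi> (x + t *\<^sub>R ?e)" "\<lambda>_. 0" 0 0] by simp
  with has_real_derivative_along_axis_0[OF dif] show ?thesis by (rule DERIV_unique)
qed

lemma partial_deriv_prod_coords:
  fixes f :: "'n::finite \<Rightarrow> real \<Rightarrow> real"
  assumes "\<And>j t. f j differentiable (at t)"
  shows "partial_deriv i (\<lambda>x. \<Prod>j\<in>UNIV. f j (x $ j)) x
     = (\<Prod>j\<in>UNIV. (if j = i then deriv (f j) else f j) (x $ j))"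
proof -
  let ?R = "\<Prod>j\<in>UNIV - {i}. f j (x $ j)"
  have split: "(\<Prod>j\<in>UNIV. g j) = g i * (\<Prod>j\<in>UNIV - {i}. g j)" for g :: "'n \<Rightarrow> real"
    by (rule prod.remove) auto
  have e: "(\<Prod>j\<in>UNIV. f j ((x + t *\<^sub>R axis i 1) $ j)) = f i (x $ i + t) * ?R" for t
    by (subst split) (auto simp: axis_def intro!: prod.cong)
  have fi: "(f i has_real_derivative deriv (f i) (x $ i + 0)) (at (x $ i + 0))"
    using assms by (simp add: DERIV_deriv_iff_real_differentiable)
  have "((\<lambda>t. x $ i + t) has_real_derivative 1) (at 0)"
    by (auto intro!: derivative_eq_intros)
  from DERIV_chain2[OF fi this]
  have "((\<lambda>t. f i (x $ i + t)) has_real_derivative deriv (f i) (x $ i)) (at 0)"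
    by simp
  then have "((\<lambda>t. f i (x $ i + t) * ?R) has_real_derivative deriv (f i) (x $ i) * ?R) (at 0)"
    by (intro derivative_eq_intros) auto
  then have "partial_deriv i (\<lambda>x. \<Prod>j\<in>UNIV. f j (x $ j)) x = deriv (f i) (x $ i) * ?R"
    unfolding partial_deriv_def e by (rule DERIV_imp_deriv)
  also have "\<dots> = (\<Prod>j\<in>UNIV. (if j = i then deriv (f j) else f j) (x $ j))"
    by (subst split) (auto intro!: prod.cong)
  finally show ?thesis .
qed

lemma differentiable_prod_coords:
  fixes f :: "'n::finite \<Rightarrow> real \<Rightarrow> real"
  assumes "\<And>j t. f j differentiable (at t)"
  shows "(\<lambda>x::real^'n. \<Prod>j\<in>UNIV. f j (x $ j)) differentiable (at x)"
proof -
  have "(\<lambda>x::real^'n. f j (x $ j)) differentiable (at x)" for j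
    using differentiable_chain_at[of "\<lambda>x::real^'n. x $ j" x "f j"] assms
    by (simp add: o_def bounded_linear_imp_differentiable bounded_linear_vec_nth)
  then obtain D where "\<And>j. ((\<lambda>x::real^'n. f j (x $ j)) has_derivative D j) (at x)"
    unfolding differentiable_def by metis
  then show ?thesis
    using has_derivative_prod[of UNIV "\<lambda>j x. f j (x $ j)" D x UNIV]
    unfolding differentiable_def by blast
qed

lemma iter_partial_prod_coords:
  fixes f :: "'n::finite \<Rightarrow> real \<Rightarrow> real"
  assumes "\<And>j. smooth_real (f j)"
  shows "iter_partial is (\<lambda>x. \<Prod>j\<in>UNIV. f j (x $ j))
    = (\<lambda>x. \<Prod>j\<in>UNIV. (deriv ^^ count_list is j) (f j) (x $ j))"
proof (induction "is")
  case (Cons i "is")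
  have d: "(deriv ^^ count_list is j) (f j) differentiable (at t)" for j t
    using assms unfolding smooth_real_def by blast
  show ?case
  proof
    fix x
    have "iter_partial (i # is) (\<lambda>x. \<Prod>j\<in>UNIV. f j (x $ j)) x
        = partial_deriv i (\<lambda>x. \<Prod>j\<in>UNIV. (deriv ^^ count_list is j) (f j) (x $ j)) x"
      using Cons by simp
    also have "\<dots> = (\<Prod>j\<in>UNIV. (if j = i then deriv ((deriv ^^ count_list is j) (f j))
        else (deriv ^^ count_list is j) (f j)) (x $ j))"
      by (rule partial_deriv_prod_coords[OF d])
    also have "\<dots> = (\<Prod>j\<in>UNIV. (deriv ^^ count_list (i # is) j) (f j) (x $ j))"
      by (rule prod.cong) auto
    finally show "iter_partial (i # is) (\<lambda>x. \<Prod>j\<in>UNIV. f j (x $ j)) x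
        = (\<Prod>j\<in>UNIV. (deriv ^^ count_list (i # is) j) (f j) (x $ j))" .
  qed
qed simp

lemma test_fun_prod_coords:
  fixes f :: "'n::finite \<Rightarrow> real \<Rightarrow> real" and a b :: "real^'n"
  assumes sm: "\<And>j. smooth_real (f j)" and z: "\<And>j t. t < a $ j \<or> b $ j < t \<Longrightarrow> f j t = 0"
  shows "test_fun (\<lambda>x::real^'n. \<Prod>j\<in>UNIV. f j (x $ j))"
  unfolding test_fun_def
proof
  show "smooth_fun (\<lambda>x::real^'n. \<Prod>j\<in>UNIV. f j (x $ j))"
    unfolding smooth_fun_def iter_partial_prod_coords[OF sm]
    by (intro allI differentiable_prod_coords) (use sm in \<open>auto simp: smooth_real_def\<close>)
  have "{x. (\<Prod>j\<in>UNIV. f j (x $ j)) \<noteq> 0} \<subseteq> cbox a b"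
  proof
    fix x assume "x \<in> {x. (\<Prod>j\<in>UNIV. f j (x $ j)) \<noteq> 0}"
    then have "f j (x $ j) \<noteq> 0" for j by auto
    then show "x \<in> cbox a b" using z unfolding mem_box_cart by (meson not_le)
  qed
  then show "compact (closure {x. (\<Prod>j\<in>UNIV. f j (x $ j)) \<noteq> 0})"
    unfolding compact_closure using bounded_cbox bounded_subset by blast
qed

lemma test_fun_differentiable: "test_fun \<phi> \<Longrightarrow> \<phi> differentiable (at x)"
  unfolding test_fun_def smooth_fun_def using iter_partial.simps(1) by metis

lemma test_fun_partial_differentiable: "test_fun \<phi> \<Longrightarrow> partial_deriv i \<phi> differentiable (at x)"
  unfolding test_fun_def smooth_fun_def using iter_partial.simps by metis

lemma continuous_on_test_fun: "test_fun \<phi> \<Longrightarrow> continuous_on UNIV \<phi>"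
  using test_fun_differentiable differentiable_imp_continuous_within continuous_at_imp_continuous_on
  by blast

lemma continuous_on_partial_test_fun: "test_fun \<phi> \<Longrightarrow> continuous_on UNIV (partial_deriv i \<phi>)"
  using test_fun_partial_differentiable differentiable_imp_continuous_within
    continuous_at_imp_continuous_on
  by blast

lemma test_fun_bounded_support:
  fixes \<phi> :: "real^'n::finite \<Rightarrow> real"
  assumes "test_fun \<phi>"
  obtains R where "\<And>x. R < norm x \<Longrightarrow> \<phi> x = 0"
proof -
  have "bounded (closure {x. \<phi> x \<noteq> 0})"
    using assms unfolding test_fun_def by (simp add: compact_imp_bounded)
  then obtain B where "\<And>x. x \<in> closure {x. \<phi> x \<noteq> 0} \<Longrightarrow> norm x \<le> B"
    unfolding bounded_iff by blast
  then have "\<phi> x = 0" if "B < norm x" for x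
    using closure_subset[of "{x. \<phi> x \<noteq> 0}"] that by force
  then show ?thesis using that by blast
qed

lemma integrable_continuous_bounded_support:
  fixes f :: "'a::euclidean_space \<Rightarrow> real"
  assumes "continuous_on UNIV f" "\<And>x. R < norm x \<Longrightarrow> f x = 0"
  shows "integrable lborel f"
proof -
  have "f = (\<lambda>x. indicator (cball 0 R) x *\<^sub>R f x)"
    using assms(2) by (auto simp: indicator_def fun_eq_iff not_le)
  moreover have "integrable lborel (\<lambda>x. indicator (cball 0 R) x *\<^sub>R f x)"
    by (rule borel_integrable_compact) (auto intro: continuous_on_subset[OF assms(1)])
  ultimately show ?thesis by simp
qed

lemma bounded_continuous_bounded_support:
  fixes f :: "'a::euclidean_space \<Rightarrow> real"
  assumes "continuous_on UNIV f" "\<And>x. R < norm x \<Longrightarrow> f x = 0"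
  obtains M where "\<And>x. \<bar>f x\<bar> \<le> M"
proof -
  have "compact (f ` cball 0 R)"
    by (rule compact_continuous_image) (auto intro: continuous_on_subset[OF assms(1)])
  then obtain M where M: "\<And>y. y \<in> f ` cball 0 R \<Longrightarrow> norm y \<le> M"
    using compact_imp_bounded bounded_iff by metis
  have "\<bar>f x\<bar> \<le> max M 0" for x
    using M[of "f x"] assms(2)[of x] by (cases "norm x \<le> R") auto
  then show ?thesis using that by blast
qed

lemma difference_quotient_along_axis_bound:
  fixes \<psi> :: "real^'n::finite \<Rightarrow> real"
  assumes "\<And>x. \<psi> differentiable (at x)" "\<And>y. \<bar>partial_deriv i \<psi> y\<bar> \<le> M"
    and supp: "\<And>x. R < norm x \<Longrightarrow> \<psi> x = 0" and h: "0 < h" "h \<le> 1"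
  shows "\<bar>(\<psi> (x + h *\<^sub>R axis i 1) - \<psi> x) / h\<bar> \<le> indicator (cball 0 (R + 1)) x * M"
proof (cases "norm x \<le> R + 1")
  case True
  obtain z where "0 < z" "z < h"
    "\<psi> (x + h *\<^sub>R axis i 1) - \<psi> (x + 0 *\<^sub>R axis i 1) = (h - 0) * partial_deriv i \<psi> (x + z *\<^sub>R axis i 1)"
    using MVT2[of 0 h "\<lambda>t. \<psi> (x + t *\<^sub>R axis i 1)" "\<lambda>t. partial_deriv i \<psi> (x + t *\<^sub>R axis i 1)"]
      has_real_derivative_along_axis assms by blast
  then show ?thesis using assms(2) h True by simp
next
  case False
  have "norm x \<le> norm (x + h *\<^sub>R axis i 1) + norm (h *\<^sub>R axis i (1::real))"
    using norm_triangle_ineq4[of "x + h *\<^sub>R axis i 1" "h *\<^sub>R axis i 1"] by simp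
  then have "R < norm (x + h *\<^sub>R axis i 1)" using False h by simp
  then show ?thesis using False supp by simp
qed

lemma difference_quotient_along_axis_tendsto:
  fixes \<psi> :: "real^'n::finite \<Rightarrow> real"
  assumes "\<psi> differentiable (at x)"
  shows "(\<lambda>n. (\<psi> (x + (1 / Suc n) *\<^sub>R axis i 1) - \<psi> x) / (1 / Suc n)) \<longlonglongrightarrow> partial_deriv i \<psi> x"
proof -
  have "((\<lambda>t. (\<psi> (x + t *\<^sub>R axis i 1) - \<psi> x) / t) \<longlongrightarrow> partial_deriv i \<psi> x) (at 0)"
    using has_real_derivative_along_axis_0[OF assms, of i] unfolding DERIV_def by simp
  note sequentially = this[unfolded tendsto_at_iff_sequentially o_def, rule_format]
  show ?thesis
    by (rule sequentially[OF _ LIMSEQ_Suc[OF lim_const_over_n[of 1]]]) simp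
qed

lemma
  fixes f :: "'a::euclidean_space \<Rightarrow> real"
  assumes "f \<in> borel_measurable borel" "integrable lborel f"
  shows integrable_translate: "integrable lborel (\<lambda>x. f (x + t))"
    and integral_translate: "(\<integral>x. f (x + t) \<partial>lborel) = (\<integral>x. f x \<partial>lborel)"
  using lborel_integrable_affine_iff[of f 1 t] lborel_integral_affine[of f 1 t] assms
  by (simp_all add: add.commute)

text \<open>The difference quotients of \<open>\<psi>\<close> integrate to 0 by translation invariance and converge
  dominatedly to \<open>\<partial>\<^sub>i \<psi>\<close>.\<close>

lemma integral_partial_deriv_eq_0:
  fixes \<psi> :: "real^'n::finite \<Rightarrow> real"
  assumes dif: "\<And>x. \<psi> differentiable (at x)"
    and cont: "continuous_on UNIV (partial_deriv i \<psi>)"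
    and supp: "\<And>x. R < norm x \<Longrightarrow> \<psi> x = 0"
  shows "(\<integral>x. partial_deriv i \<psi> x \<partial>lborel) = 0"
proof -
  let ?e = "axis i (1::real) :: real^'n"
  let ?d = "partial_deriv i \<psi>"
  have cpsi: "continuous_on UNIV \<psi>"
    using dif differentiable_imp_continuous_within continuous_at_imp_continuous_on by blast
  have psi_m [measurable]: "\<psi> \<in> borel_measurable borel" and [measurable]: "?d \<in> borel_measurable borel"
    using cpsi cont by (auto intro: borel_measurable_continuous_onI)
  have int_psi: "integrable lborel \<psi>" by (rule integrable_continuous_bounded_support[OF cpsi supp])
  have "R < norm x \<Longrightarrow> ?d x = 0" for x
    by (rule partial_deriv_eq_0_outside_support[OF dif supp])
  then obtain M where M: "\<And>x. \<bar>?d x\<bar> \<le> M"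
    using bounded_continuous_bounded_support[OF cont] by blast
  define Q where "Q n x = (\<psi> (x + (1 / Suc n) *\<^sub>R ?e) - \<psi> x) / (1 / Suc n)" for n x
  have [measurable]: "Q n \<in> borel_measurable borel" for n unfolding Q_def by measurable
  have int_Q: "(\<integral>x. Q n x \<partial>lborel) = 0" for n
    using integrable_translate[OF psi_m int_psi] integral_translate[OF psi_m int_psi] int_psi
    unfolding Q_def by simp
  have bound: "\<bar>Q n x\<bar> \<le> indicator (cball 0 (R + 1)) x * M" for n x
    unfolding Q_def by (rule difference_quotient_along_axis_bound[OF dif M supp]) simp_all
  have dominant: "integrable lborel (\<lambda>x::real^'n. indicator (cball 0 (R + 1)) x * M)"
    using emeasure_lborel_cball_finite[of "0::real^'n" "R + 1"]
    by (intro integrable_mult_left integrable_real_indicator) auto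
  have "(\<lambda>n. Q n x) \<longlonglongrightarrow> ?d x" for x
    unfolding Q_def by (rule difference_quotient_along_axis_tendsto[OF dif])
  then have "(\<lambda>n. \<integral>x. Q n x \<partial>lborel) \<longlonglongrightarrow> (\<integral>x. ?d x \<partial>lborel)"
    by (intro integral_dominated_convergence[OF _ _ dominant]) (use bound in auto)
  then show ?thesis unfolding int_Q by (simp add: LIMSEQ_const_iff)
qed

lemma
  fixes u \<phi> :: "real^'n::finite \<Rightarrow> real"
  assumes u: "test_fun u" and \<phi>: "test_fun \<phi>"
  shows integrable_test_fun_mult_partial: "integrable lborel (\<lambda>x. u x * partial_deriv i \<phi> x)"
    and integrable_partial_test_fun_mult: "integrable lborel (\<lambda>x. partial_deriv i u x * \<phi> x)"
    and test_fun_integration_by_parts: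
      "(\<integral>x. u x * partial_deriv i \<phi> x \<partial>lborel) = - (\<integral>x. partial_deriv i u x * \<phi> x \<partial>lborel)"
proof -
  obtain R where R: "\<And>x. R < norm x \<Longrightarrow> u x = 0" using test_fun_bounded_support[OF u] by blast
  have du: "\<And>x. u differentiable (at x)" and dp: "\<And>x. \<phi> differentiable (at x)"
    using test_fun_differentiable u \<phi> by blast+
  have cont: "continuous_on UNIV u" "continuous_on UNIV (partial_deriv i u)"
    "continuous_on UNIV \<phi>" "continuous_on UNIV (partial_deriv i \<phi>)"
    using continuous_on_test_fun continuous_on_partial_test_fun u \<phi> by blast+
  show i1: "integrable lborel (\<lambda>x. u x * partial_deriv i \<phi> x)"
    using cont R by (intro integrable_continuous_bounded_support[of _ R]) (auto intro!: continuous_intros)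
  show i2: "integrable lborel (\<lambda>x. partial_deriv i u x * \<phi> x)"
    using cont R partial_deriv_eq_0_outside_support[OF du R]
    by (intro integrable_continuous_bounded_support[of _ R]) (auto intro!: continuous_intros)
  have pe: "partial_deriv i (\<lambda>x. u x * \<phi> x) = (\<lambda>x. partial_deriv i u x * \<phi> x + u x * partial_deriv i \<phi> x)"
    using partial_deriv_mult[OF du dp] by (intro ext) simp
  have "(\<integral>x. partial_deriv i (\<lambda>x. u x * \<phi> x) x \<partial>lborel) = 0"
    using du dp cont R unfolding pe[symmetric]
    by (intro integral_partial_deriv_eq_0[of _ _ R]) (auto simp: pe intro!: continuous_intros)
  then show "(\<integral>x. u x * partial_deriv i \<phi> x \<partial>lborel) = - (\<integral>x. partial_deriv i u x * \<phi> x \<partial>lborel)"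
    unfolding pe using i1 i2 by simp
qed

lemma partial_deriv_scale:
  fixes G :: "real^'n::finite \<Rightarrow> real"
  assumes "G differentiable (at (c *\<^sub>R x))"
  shows "partial_deriv i (\<lambda>x. K * G (c *\<^sub>R x)) x = K * c * partial_deriv i G (c *\<^sub>R x)"
proof -
  let ?e = "axis i (1::real) :: real^'n"
  have "((\<lambda>t. G (c *\<^sub>R x + (c * t) *\<^sub>R ?e)) has_real_derivative partial_deriv i G (c *\<^sub>R x) * c) (at 0)"
    using DERIV_chain2[of "\<lambda>s. G (c *\<^sub>R x + s *\<^sub>R ?e)" _ "\<lambda>t. c * t" 0 c]
      has_real_derivative_along_axis_0[OF assms, of i]
    by (auto intro!: derivative_eq_intros)
  then have "((\<lambda>t. K * G (c *\<^sub>R (x + t *\<^sub>R ?e))) has_real_derivative K * (partial_deriv i G (c *\<^sub>R x) * c)) (at 0)"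
    by (auto intro!: derivative_eq_intros simp: scaleR_add_right)
  then show ?thesis unfolding partial_deriv_def[of i "\<lambda>x. K * G (c *\<^sub>R x)"]
    by (subst DERIV_imp_deriv) (auto simp: algebra_simps)
qed

lemma differentiable_scale:
  fixes G :: "real^'n::finite \<Rightarrow> real"
  assumes "G differentiable (at (c *\<^sub>R x))"
  shows "(\<lambda>x. K * G (c *\<^sub>R x)) differentiable (at x)"
  using differentiable_chain_at[of "\<lambda>x. c *\<^sub>R x" x G] assms
  by (auto intro!: differentiable_mult derivative_intros simp: o_def)

lemma iter_partial_scale:
  fixes \<phi> :: "real^'n::finite \<Rightarrow> real"
  assumes "smooth_fun \<phi>"
  shows "iter_partial is (\<lambda>x. \<phi> (c *\<^sub>R x)) = (\<lambda>x. c ^ length is * iter_partial is \<phi> (c *\<^sub>R x))"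
proof (induction "is")
  case (Cons i "is")
  have "iter_partial is \<phi> differentiable (at y)" for y
    using assms unfolding smooth_fun_def by blast
  then show ?case using Cons by (intro ext) (simp add: partial_deriv_scale algebra_simps)
qed simp

lemma
  fixes \<phi> :: "real^'n::finite \<Rightarrow> real"
  assumes \<phi>: "test_fun \<phi>" and c: "c \<noteq> 0"
  shows test_fun_scale: "test_fun (\<lambda>x. \<phi> (c *\<^sub>R x))"
    and partial_deriv_test_fun_scale:
      "partial_deriv i (\<lambda>x. \<phi> (c *\<^sub>R x)) x = c * partial_deriv i \<phi> (c *\<^sub>R x)"
proof -
  have sm: "smooth_fun \<phi>" using \<phi> unfolding test_fun_def by simp
  show "partial_deriv i (\<lambda>x. \<phi> (c *\<^sub>R x)) x = c * partial_deriv i \<phi> (c *\<^sub>R x)"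
    using iter_partial_scale[OF sm, of "[i]" c] by (simp add: fun_eq_iff)
  have "smooth_fun (\<lambda>x. \<phi> (c *\<^sub>R x))"
    using sm unfolding smooth_fun_def iter_partial_scale[OF sm] by (blast intro: differentiable_scale)
  moreover have "{x. \<phi> (c *\<^sub>R x) \<noteq> 0} = (*\<^sub>R) (inverse c) ` {y. \<phi> y \<noteq> 0}"
    using c by (auto simp: image_iff intro!: exI[of _ "c *\<^sub>R _"])
  then have "closure {x. \<phi> (c *\<^sub>R x) \<noteq> 0} = (*\<^sub>R) (inverse c) ` closure {y. \<phi> y \<noteq> 0}"
    by (simp add: closure_scaleR)
  moreover have "compact ((*\<^sub>R) (inverse c) ` closure {y. \<phi> y \<noteq> 0})"
    using \<phi> unfolding test_fun_def by (intro compact_scaling) simp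
  ultimately show "test_fun (\<lambda>x. \<phi> (c *\<^sub>R x))" unfolding test_fun_def by simp
qed

lemma continuous_not_AE_zero:
  fixes f :: "'a::euclidean_space \<Rightarrow> real"
  assumes "continuous_on UNIV f" "f x0 \<noteq> 0"
  shows "\<not> (AE x in lborel. f x = 0)"
proof
  assume ae: "AE x in lborel. f x = 0"
  have "open {x. f x \<noteq> 0}" using assms(1) by (intro open_Collect_neq continuous_intros) auto
  then obtain a b where ab: "box a b \<subseteq> {x. f x \<noteq> 0}" "\<forall>i\<in>Basis. a \<bullet> i < b \<bullet> i"
    using assms(2) by (metis mem_Collect_eq open_contains_box)
  have "AE x in lborel. x \<notin> box a b" using ae ab(1) by (auto elim!: AE_mp)
  then have "box a b \<in> null_sets lborel" by (subst AE_iff_null_sets) auto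
  then have "emeasure lborel (box a b) = 0" by auto
  moreover have "0 < (\<Prod>i\<in>Basis. (b - a) \<bullet> i)"
    using ab(2) by (intro prod_pos) (auto simp: inner_diff_left)
  moreover have "emeasure lborel (box a b) = ennreal (\<Prod>i\<in>Basis. (b - a) \<bullet> i)"
    using ab(2) by (subst emeasure_lborel_box_eq) (auto simp: less_imp_le)
  ultimately show False by (simp add: ennreal_eq_0_iff)
qed

definition bump :: "real^'n::finite \<Rightarrow> real" where
  "bump x = (\<Prod>j\<in>UNIV. exp_cutoff (1 + x $ j) * exp_cutoff (1 - x $ j))"

lemma test_fun_bump: "test_fun (bump :: real^'n::finite \<Rightarrow> real)"
proof -
  have "smooth_real (\<lambda>t. exp_cutoff (1 + t) * exp_cutoff (1 - t))"
    using smooth_real_affine[OF smooth_exp_cutoff, of 1 1] smooth_real_affine[OF smooth_exp_cutoff, of "-1" 1]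
    by (intro smooth_real_mult) (simp_all add: add.commute)
  then have "test_fun (\<lambda>x::real^'n. \<Prod>j\<in>UNIV. (\<lambda>j t. exp_cutoff (1 + t) * exp_cutoff (1 - t)) j (x $ j))"
    by (intro test_fun_prod_coords[where a="\<chi> j. -1" and b="\<chi> j. 1"]) (auto simp: exp_cutoff_eq_0)
  then show ?thesis unfolding bump_def[abs_def] by simp
qed

lemma bump_not_AE_zero: "\<not> (AE x in lborel. (bump :: real^'n::finite \<Rightarrow> real) x = 0)"
  using continuous_on_test_fun[OF test_fun_bump] exp_cutoff_pos[of 1]
  by (intro continuous_not_AE_zero[of _ 0]) (auto simp: bump_def)

section \<open>Weak gradients\<close>

lemma
  fixes f :: "'a::euclidean_space \<Rightarrow> real"
  assumes [measurable]: "f \<in> borel_measurable borel" "B \<in> sets borel" and int: "integrable lborel f"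
  shows integrable_indicator_pos_part: "integrable lborel (\<lambda>x. indicator B x * max (f x) 0)"
    and emeasure_density_eq_integral_pos_part:
      "emeasure (density lborel (\<lambda>x. ennreal (f x))) B = ennreal (\<integral>x. indicator B x * max (f x) 0 \<partial>lborel)"
proof -
  show i: "integrable lborel (\<lambda>x. indicator B x * max (f x) 0)"
    using integrable_norm[OF int] by (rule Bochner_Integration.integrable_bound) (auto simp: indicator_def)
  have "emeasure (density lborel (\<lambda>x. ennreal (f x))) B = (\<integral>\<^sup>+x. ennreal (f x) * indicator B x \<partial>lborel)"
    by (subst emeasure_density) auto
  also have "\<dots> = (\<integral>\<^sup>+x. ennreal (indicator B x * max (f x) 0) \<partial>lborel)"
    by (intro nn_integral_cong) (auto simp: indicator_def max_def ennreal_neg)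
  also have "\<dots> = ennreal (\<integral>x. indicator B x * max (f x) 0 \<partial>lborel)"
    using i by (intro nn_integral_eq_integral) auto
  finally show "emeasure (density lborel (\<lambda>x. ennreal (f x))) B = ennreal (\<integral>x. indicator B x * max (f x) 0 \<partial>lborel)" .
qed

lemma density_eq_density_uminus_if_box_integrals_zero:
  fixes f :: "'a::euclidean_space \<Rightarrow> real"
  assumes f[measurable]: "f \<in> borel_measurable borel" and int: "integrable lborel f"
    and zero: "\<And>a b. (\<integral>x. indicator (box a b) x * f x \<partial>lborel) = 0"
  shows "density lborel (\<lambda>x. ennreal (f x)) = density lborel (\<lambda>x. ennreal (- f x))"
proof -
  have int': "integrable lborel (\<lambda>x. - f x)" using int by simp
  let ?E = "range (\<lambda>(a, b). box a b :: 'a set)"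
  let ?A = "\<lambda>n::nat. box (- (real n *\<^sub>R One)) (real n *\<^sub>R One) :: 'a set"
  show ?thesis
  proof (rule measure_eqI_generator_eq[where E="?E" and \<Omega>=UNIV and A="?A"])
    show "Int_stable ?E" by (auto simp: Int_stable_def box_Int_box)
    show "sets (density lborel (\<lambda>x. ennreal (f x))) = sigma_sets UNIV ?E"
      "sets (density lborel (\<lambda>x. ennreal (- f x))) = sigma_sets UNIV ?E"
      by (simp_all add: borel_eq_box)
    show "(\<Union>n. ?A n) = UNIV" by (rule UN_box_eq_UNIV)
    show "emeasure (density lborel (\<lambda>x. ennreal (f x))) (?A n) \<noteq> \<infinity>" for n
      using emeasure_density_eq_integral_pos_part[OF f _ int] by simp
    show "emeasure (density lborel (\<lambda>x. ennreal (f x))) X = emeasure (density lborel (\<lambda>x. ennreal (- f x))) X"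
      if X: "X \<in> ?E" for X
    proof -
      obtain a b where X_eq: "X = box a b" using X by auto
      have "indicator X x * f x = indicator X x * max (f x) 0 - indicator X x * max (- f x) 0" for x
        by (auto simp: indicator_def)
      then have "(\<integral>x. indicator X x * max (f x) 0 \<partial>lborel) = (\<integral>x. indicator X x * max (- f x) 0 \<partial>lborel)"
        using zero[of a b] integrable_indicator_pos_part[OF f _ int, of X]
          integrable_indicator_pos_part[OF _ _ int', of X] X_eq by simp
      then show ?thesis
        using emeasure_density_eq_integral_pos_part[OF f _ int, of X]
          emeasure_density_eq_integral_pos_part[OF _ _ int', of X] X_eq by simp
    qed
  qed auto
qed

lemma AE_zero_if_box_integrals_zero:
  fixes f :: "'a::euclidean_space \<Rightarrow> real"
  assumes f[measurable]: "f \<in> borel_measurable borel" and int: "integrable lborel f"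
    and zero: "\<And>a b. (\<integral>x. indicator (box a b) x * f x \<partial>lborel) = 0"
  shows "AE x in lborel. f x = 0"
proof -
  have "integral\<^sup>N lborel (\<lambda>x. ennreal (f x)) \<le> (\<integral>\<^sup>+x. ennreal (norm (f x)) \<partial>lborel)"
    by (intro nn_integral_mono) (simp add: ennreal_leI)
  also have "\<dots> < \<infinity>" using int by (simp add: integrable_iff_bounded)
  finally have "AE x in lborel. ennreal (f x) = ennreal (- f x)"
    using finite_density_unique[of "\<lambda>x. ennreal (f x)" lborel "\<lambda>x. ennreal (- f x)"]
      density_eq_density_uminus_if_box_integrals_zero[OF assms] by auto
  then show ?thesis
  proof (rule eventually_mono)
    fix x assume "ennreal (f x) = ennreal (- f x)"
    then show "f x = 0" by (cases "0 < f x"; cases "f x < 0") (auto simp: ennreal_neg)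
  qed
qed

lemma borel_measurable_vec_nth [measurable (raw)]:
  fixes f :: "'a \<Rightarrow> real^'n::finite"
  shows "f \<in> borel_measurable M \<Longrightarrow> (\<lambda>x. f x $ i) \<in> borel_measurable M"
  using measurable_compose[of f M borel "\<lambda>v. v $ i" borel]
  by (auto intro!: borel_measurable_continuous_onI continuous_intros)

definition box_cutoff :: "nat \<Rightarrow> real^'n::finite \<Rightarrow> real^'n \<Rightarrow> real^'n \<Rightarrow> real" where
  "box_cutoff n a b x =
     (\<Prod>j\<in>UNIV. exp_cutoff (real (Suc n) * (x $ j - a $ j)) * exp_cutoff (real (Suc n) * (b $ j - x $ j)))"

lemma test_fun_box_cutoff: "test_fun (box_cutoff n a b)"
proof -
  have "smooth_real (\<lambda>t. exp_cutoff (real (Suc n) * (t - a $ j)) * exp_cutoff (real (Suc n) * (b $ j - t)))"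
    for j
    using smooth_real_affine[OF smooth_exp_cutoff, of "real (Suc n)" "- real (Suc n) * a $ j"]
      smooth_real_affine[OF smooth_exp_cutoff, of "- real (Suc n)" "real (Suc n) * b $ j"]
    by (intro smooth_real_mult) (simp_all add: algebra_simps)
  moreover have "exp_cutoff (real (Suc n) * (t - a $ j)) * exp_cutoff (real (Suc n) * (b $ j - t)) = 0"
    if "t < a $ j \<or> b $ j < t" for j t
    using that by (auto simp: exp_cutoff_eq_0 mult_nonneg_nonpos)
  ultimately show ?thesis
    unfolding box_cutoff_def[abs_def] by (rule test_fun_prod_coords)
qed

lemma box_cutoff_nonneg: "0 \<le> box_cutoff n a b x"
  and box_cutoff_le_1: "box_cutoff n a b x \<le> 1"
  unfolding box_cutoff_def
  by (auto intro!: prod_nonneg prod_le_1 mult_le_one mult_nonneg_nonneg exp_cutoff_nonneg exp_cutoff_le_1)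

lemma box_cutoff_eq_0:
  assumes "x \<notin> box a b"
  shows "box_cutoff n a b x = 0"
proof -
  obtain j where "x $ j \<le> a $ j \<or> b $ j \<le> x $ j"
    using assms by (auto simp: mem_box_cart not_less)
  then have "exp_cutoff (real (Suc n) * (x $ j - a $ j)) * exp_cutoff (real (Suc n) * (b $ j - x $ j)) = 0"
    by (auto simp: exp_cutoff_eq_0 mult_nonneg_nonpos)
  then show ?thesis unfolding box_cutoff_def by (intro prod_zero) auto
qed

lemma box_cutoff_tendsto_indicator: "(\<lambda>n. box_cutoff n a b x) \<longlonglongrightarrow> indicator (box a b) x"
proof (cases "x \<in> box a b")
  case True
  then have "a $ j < x $ j" "x $ j < b $ j" for j by (auto simp: mem_box_cart)
  then have "(\<lambda>n. exp_cutoff (real (Suc n) * (x $ j - a $ j)) * exp_cutoff (real (Suc n) * (b $ j - x $ j)))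
      \<longlonglongrightarrow> 1 * 1" for j
    by (intro tendsto_mult exp_cutoff_scaled_tendsto_1) auto
  then have "(\<lambda>n. box_cutoff n a b x) \<longlonglongrightarrow> (\<Prod>j\<in>UNIV. 1 * 1)"
    using tendsto_prod[of UNIV "\<lambda>j n. exp_cutoff (real (Suc n) * (x $ j - a $ j))
        * exp_cutoff (real (Suc n) * (b $ j - x $ j))" "\<lambda>_. 1 * 1" sequentially]
    unfolding box_cutoff_def by simp
  then show ?thesis using True by simp
qed (simp add: box_cutoff_eq_0)

lemma box_integral_eq_0_if_test_integrals_eq_0:
  fixes h :: "real^'n::finite \<Rightarrow> real"
  assumes [measurable]: "h \<in> borel_measurable borel"
    and loc: "integrable lborel (\<lambda>x. indicator (cbox a b) x * \<bar>h x\<bar>)"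
    and test: "\<And>\<phi>. test_fun \<phi> \<Longrightarrow> (\<integral>x. h x * \<phi> x \<partial>lborel) = 0"
  shows "(\<integral>x. indicator (box a b) x * h x \<partial>lborel) = 0"
proof -
  have [measurable]: "box_cutoff n a b \<in> borel_measurable borel" for n
    using continuous_on_test_fun[OF test_fun_box_cutoff] by (rule borel_measurable_continuous_onI)
  have "box_cutoff n a b x \<le> indicator (cbox a b) x" for n x
  proof (cases "x \<in> cbox a b")
    case False
    then have "x \<notin> box a b" using box_subset_cbox by blast
    then show ?thesis using False by (simp add: box_cutoff_eq_0)
  qed (simp add: box_cutoff_le_1)
  then have "\<bar>h x\<bar> * box_cutoff n a b x \<le> \<bar>h x\<bar> * indicator (cbox a b) x" for n x
    by (intro mult_left_mono) auto
  then have "norm (h x * box_cutoff n a b x) \<le> indicator (cbox a b) x * \<bar>h x\<bar>" for n x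
    using box_cutoff_nonneg[of n a b x] by (simp add: abs_mult mult.commute)
  then have "(\<lambda>n. \<integral>x. h x * box_cutoff n a b x \<partial>lborel) \<longlonglongrightarrow> (\<integral>x. h x * indicator (box a b) x \<partial>lborel)"
    by (intro integral_dominated_convergence[OF _ _ loc] AE_I2 tendsto_mult tendsto_const
        box_cutoff_tendsto_indicator) auto
  then show ?thesis
    using test[OF test_fun_box_cutoff] by (simp add: LIMSEQ_const_iff mult.commute)
qed

lemma AE_zero_if_test_integrals_zero:
  fixes h :: "real^'n::finite \<Rightarrow> real"
  assumes [measurable]: "h \<in> borel_measurable borel"
    and loc: "\<And>a b. integrable lborel (\<lambda>x. indicator (cbox a b) x * \<bar>h x\<bar>)"
    and test: "\<And>\<phi>. test_fun \<phi> \<Longrightarrow> (\<integral>x. h x * \<phi> x \<partial>lborel) = 0"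
  shows "AE x in lborel. h x = 0"
proof -
  define B where "B k = box (- (real k *\<^sub>R One)) (real k *\<^sub>R One :: real^'n)" for k :: nat
  have "AE x in lborel. indicator (B k) x * h x = 0" for k
  proof (rule AE_zero_if_box_integrals_zero)
    show "integrable lborel (\<lambda>x. indicator (B k) x * h x)"
      using box_subset_cbox[of "- (real k *\<^sub>R One)" "real k *\<^sub>R One :: real^'n"]
      by (intro Bochner_Integration.integrable_bound[OF loc[of "- (real k *\<^sub>R One)" "real k *\<^sub>R One"]])
        (auto simp: B_def indicator_def)
    fix a b :: "real^'n"
    have "(\<lambda>x. indicator (box a b) x * (indicator (B k) x * h x)) = (\<lambda>x. indicator (box a b \<inter> B k) x * h x)"
      by (auto simp: indicator_def fun_eq_iff)
    also have "box a b \<inter> B k = box (\<Sum>i\<in>Basis. max (a \<bullet> i) ((- (real k *\<^sub>R One)) \<bullet> i) *\<^sub>R i)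
        (\<Sum>i\<in>Basis. min (b \<bullet> i) ((real k *\<^sub>R One) \<bullet> i) *\<^sub>R i)"
      unfolding B_def by (rule box_Int_box)
    finally show "(\<integral>x. indicator (box a b) x * (indicator (B k) x * h x) \<partial>lborel) = 0"
      using box_integral_eq_0_if_test_integrals_eq_0[OF assms(1) loc test] by simp
  qed (simp add: B_def)
  then have "AE x in lborel. \<forall>k. indicator (B k) x * h x = 0"
    by (intro AE_all_countable[THEN iffD2]) blast
  then show ?thesis
  proof (rule eventually_mono)
    fix x assume vanish: "\<forall>k. indicator (B k) x * h x = 0"
    obtain k where "x \<in> B k" using UN_box_eq_UNIV unfolding B_def by blast
    with vanish[rule_format, of k] show "h x = 0" by simp
  qed
qed

lemma norm_le_1_plus_norm_powr:
  assumes "1 \<le> p"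
  shows "norm (x::'a::real_normed_vector) \<le> 1 + norm x powr p"
proof (cases "norm x \<le> 1")
  case False
  then have "norm x powr 1 \<le> norm x powr p" using assms by (intro powr_mono) auto
  then show ?thesis using False by simp
qed (use powr_ge_zero[of "norm x" p] in linarith)

lemma weak_gradient_unique_AE:
  fixes u :: "real^'n::finite \<Rightarrow> real" and g1 g2 :: "real^'n \<Rightarrow> real^'n"
  assumes p: "1 \<le> p"
    and w1: "weak_gradient u g1" "g1 \<in> borel_measurable lborel" "integrable lborel (\<lambda>x. norm (g1 x) powr p)"
    and w2: "weak_gradient u g2" "g2 \<in> borel_measurable lborel" "integrable lborel (\<lambda>x. norm (g2 x) powr p)"
  shows "AE x in lborel. g1 x = g2 x"
proof -
  have [measurable]: "g1 \<in> borel_measurable borel" "g2 \<in> borel_measurable borel"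
    using w1(2) w2(2) by simp_all
  have "AE x in lborel. g1 x $ i - g2 x $ i = 0" for i
  proof (rule AE_zero_if_test_integrals_zero)
    show "(\<lambda>x. g1 x $ i - g2 x $ i) \<in> borel_measurable borel" by measurable
    fix a b :: "real^'n"
    have "\<bar>g1 x $ i - g2 x $ i\<bar> \<le> 2 + norm (g1 x) powr p + norm (g2 x) powr p" for x
      using component_le_norm_cart[of "g1 x" i] component_le_norm_cart[of "g2 x" i]
        norm_le_1_plus_norm_powr[OF p, of "g1 x"] norm_le_1_plus_norm_powr[OF p, of "g2 x"]
      by linarith
    note bound = this
    show "integrable lborel (\<lambda>x. indicator (cbox a b) x * \<bar>g1 x $ i - g2 x $ i\<bar>)"
    proof (rule Bochner_Integration.integrable_bound)
      show "integrable lborel (\<lambda>x. 2 * indicator (cbox a b) x + norm (g1 x) powr p + norm (g2 x) powr p)"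
        using w1(3) w2(3) emeasure_lborel_cbox_finite[of a b]
        by (intro Bochner_Integration.integrable_add integrable_mult_right integrable_real_indicator) auto
      show "(\<lambda>x. indicator (cbox a b) x * \<bar>g1 x $ i - g2 x $ i\<bar>) \<in> borel_measurable lborel"
        by simp
      show "AE x in lborel. norm (indicator (cbox a b) x * \<bar>g1 x $ i - g2 x $ i\<bar>)
          \<le> norm (2 * indicator (cbox a b) x + norm (g1 x) powr p + norm (g2 x) powr p)"
        using bound by (intro AE_I2) (auto simp: indicator_def)
    qed
  next
    fix \<phi> :: "real^'n \<Rightarrow> real" assume "test_fun \<phi>"
    then show "(\<integral>x. (g1 x $ i - g2 x $ i) * \<phi> x \<partial>lborel) = 0"
      using w1(1) w2(1) unfolding weak_gradient_def by (simp add: left_diff_distrib)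
  qed
  then have "AE x in lborel. \<forall>i\<in>UNIV. g1 x $ i = g2 x $ i"
    by (intro AE_finite_allI) auto
  then show ?thesis by (rule eventually_mono) (simp add: vec_eq_iff)
qed

lemma
  assumes "W1p p u"
  shows weak_gradient_grad: "weak_gradient u (grad p u)"
    and grad_borel_measurable: "grad p u \<in> borel_measurable lborel"
    and integrable_norm_grad_powr: "integrable lborel (\<lambda>x. norm (grad p u x) powr p)"
proof -
  have "\<exists>g. weak_gradient u g \<and> g \<in> borel_measurable lborel \<and> integrable lborel (\<lambda>x. norm (g x) powr p)"
    using assms unfolding W1p_def by blast
  then have "weak_gradient u (grad p u) \<and> grad p u \<in> borel_measurable lborel
      \<and> integrable lborel (\<lambda>x. norm (grad p u x) powr p)"
    unfolding grad_def by (rule someI_ex)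
  then show "weak_gradient u (grad p u)" "grad p u \<in> borel_measurable lborel"
    "integrable lborel (\<lambda>x. norm (grad p u x) powr p)" by auto
qed

text \<open>\<open>grad\<close> is an arbitrary choice of weak gradient; by uniqueness \<open>gnorm\<close> does not depend on it.\<close>

lemma gnorm_eq_weak_gradient:
  fixes u :: "real^'n::finite \<Rightarrow> real" and g :: "real^'n \<Rightarrow> real^'n"
  assumes p: "1 \<le> p" and W: "W1p p u"
    and g: "weak_gradient u g" "g \<in> borel_measurable lborel" "integrable lborel (\<lambda>x. norm (g x) powr p)"
  shows "gnorm p u = (\<integral>x. norm (g x) powr p \<partial>lborel) powr (1 / p)"
proof -
  have "AE x in lborel. grad p u x = g x"
    using weak_gradient_grad[OF W] grad_borel_measurable[OF W] integrable_norm_grad_powr[OF W] g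
    by (intro weak_gradient_unique_AE[OF p])
  then have "(\<integral>x. norm (grad p u x) powr p \<partial>lborel) = (\<integral>x. norm (g x) powr p \<partial>lborel)"
    by (intro integral_cong_AE) (use grad_borel_measurable[OF W] g in auto)
  then show ?thesis unfolding gnorm_def by simp
qed

lemma Lnorm_nonneg: "0 \<le> Lnorm r u"
  unfolding Lnorm_def by simp

lemma gnorm_nonneg: "0 \<le> gnorm p u"
  unfolding gnorm_def by simp

lemma Lnorm_powr_eq_integral: "0 < r \<Longrightarrow> Lnorm r u powr r = (\<integral>x. \<bar>u x\<bar> powr r \<partial>lborel)"
  unfolding Lnorm_def by (simp add: powr_powr integral_nonneg)

lemma integral_abs_powr_eq_0_iff:
  fixes u :: "'a::euclidean_space \<Rightarrow> real"
  assumes "integrable lborel (\<lambda>x. \<bar>u x\<bar> powr r)"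
  shows "(\<integral>x. \<bar>u x\<bar> powr r \<partial>lborel) = 0 \<longleftrightarrow> (AE x in lborel. u x = 0)"
  using integral_nonneg_eq_0_iff_AE[OF assms] by simp

lemma W1p_test_fun:
  fixes u :: "real^'n::finite \<Rightarrow> real"
  assumes u: "test_fun u" and p: "0 < p"
  shows "W1p p u"
proof -
  obtain R where R: "\<And>x. R < norm x \<Longrightarrow> u x = 0" using test_fun_bounded_support[OF u] by blast
  have cu: "continuous_on UNIV u" using continuous_on_test_fun[OF u] .
  have cg: "continuous_on UNIV (\<lambda>x. \<chi> i. partial_deriv i u x)"
    using continuous_on_partial_test_fun[OF u] by (intro continuous_on_vec_lambda) auto
  have wg: "weak_gradient u (\<lambda>x. \<chi> i. partial_deriv i u x)"
    unfolding weak_gradient_def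
    using integrable_test_fun_mult_partial[OF u] integrable_partial_test_fun_mult[OF u]
      test_fun_integration_by_parts[OF u] by simp
  have "(\<chi> i. partial_deriv i u x) = 0" if "R < norm x" for x
    using partial_deriv_eq_0_outside_support[OF test_fun_differentiable[OF u] R that]
    by (simp add: vec_eq_iff)
  then have "integrable lborel (\<lambda>x. norm (\<chi> i. partial_deriv i u x) powr p)"
    using cg p by (intro integrable_continuous_bounded_support[of _ R] continuous_on_powr')
      (auto intro: continuous_intros)
  moreover have "integrable lborel (\<lambda>x. \<bar>u x\<bar> powr p)"
    using cu R p by (intro integrable_continuous_bounded_support[of _ R] continuous_on_powr')
      (auto intro: continuous_intros)
  ultimately show ?thesis
    unfolding W1p_def in_Lp_def using wg cu cg by (auto intro: borel_measurable_continuous_onI)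
qed

lemma W1p_cmult:
  fixes u :: "real^'n::finite \<Rightarrow> real"
  assumes W: "W1p p u"
  shows "W1p p (\<lambda>x. c * u x)"
proof -
  have "u \<in> borel_measurable lborel" "integrable lborel (\<lambda>x. \<bar>u x\<bar> powr p)"
    using W unfolding W1p_def in_Lp_def by auto
  then have "in_Lp p (\<lambda>x. c * u x)"
    unfolding in_Lp_def by (simp add: abs_mult powr_mult)
  moreover have "weak_gradient (\<lambda>x. c * u x) (\<lambda>x. c *\<^sub>R grad p u x)"
    using weak_gradient_grad[OF W] unfolding weak_gradient_def by (auto simp: mult.assoc)
  moreover have "integrable lborel (\<lambda>x. norm (c *\<^sub>R grad p u x) powr p)"
    using integrable_norm_grad_powr[OF W] by (simp add: powr_mult)
  ultimately show ?thesis
    unfolding W1p_def using grad_borel_measurable[OF W] by auto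
qed

definition dilation :: "real \<Rightarrow> real \<Rightarrow> (real^'n::finite \<Rightarrow> real) \<Rightarrow> real^'n \<Rightarrow> real" where
  "dilation p s u x = s powr (real CARD('n) / p) * u (s *\<^sub>R x)"

lemma weak_gradient_dilation:
  fixes u :: "real^'n::finite \<Rightarrow> real" and g :: "real^'n \<Rightarrow> real^'n"
  assumes s: "0 < s" and [measurable]: "u \<in> borel_measurable borel" "g \<in> borel_measurable borel"
    and wg: "weak_gradient u g"
  shows "weak_gradient (dilation p s u) (\<lambda>x. (s powr (real CARD('n) / p) * s) *\<^sub>R g (s *\<^sub>R x))"
  unfolding weak_gradient_def
proof (intro allI impI)
  fix \<phi> :: "real^'n \<Rightarrow> real" and i assume \<phi>: "test_fun \<phi>"
  define K where "K = s powr (real CARD('n) / p)"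
  define \<psi> where "\<psi> y = \<phi> (inverse s *\<^sub>R y)" for y
  have \<psi>: "test_fun \<psi>" unfolding \<psi>_def[abs_def] using test_fun_scale[OF \<phi>] s by simp
  have d\<psi>: "partial_deriv i \<psi> y = inverse s * partial_deriv i \<phi> (inverse s *\<^sub>R y)" for y
    unfolding \<psi>_def[abs_def] using partial_deriv_test_fun_scale[OF \<phi>] s by simp
  have [measurable]: "\<psi> \<in> borel_measurable borel" "partial_deriv i \<psi> \<in> borel_measurable borel"
    using continuous_on_test_fun[OF \<psi>] continuous_on_partial_test_fun[OF \<psi>]
    by (auto intro: borel_measurable_continuous_onI)
  have [measurable]: "(\<lambda>x. g x $ i) \<in> borel_measurable borel"
    by measurable
  have wu: "integrable lborel (\<lambda>y. u y * partial_deriv i \<psi> y)" "integrable lborel (\<lambda>y. g y $ i * \<psi> y)"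
    "(\<integral>y. u y * partial_deriv i \<psi> y \<partial>lborel) = - (\<integral>y. g y $ i * \<psi> y \<partial>lborel)"
    using wg \<psi> unfolding weak_gradient_def by auto
  have e1: "dilation p s u x * partial_deriv i \<phi> x = K * s * (u (s *\<^sub>R x) * partial_deriv i \<psi> (s *\<^sub>R x))" for x
    unfolding dilation_def K_def d\<psi> using s by simp
  have e2: "((K * s) *\<^sub>R g (s *\<^sub>R x)) $ i * \<phi> x = K * s * (g (s *\<^sub>R x) $ i * \<psi> (s *\<^sub>R x))" for x
    unfolding \<psi>_def using s by simp
  show "integrable lborel (\<lambda>x. dilation p s u x * partial_deriv i \<phi> x) \<and>
      integrable lborel (\<lambda>x. ((s powr (real CARD('n) / p) * s) *\<^sub>R g (s *\<^sub>R x)) $ i * \<phi> x) \<and>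
      (\<integral>x. dilation p s u x * partial_deriv i \<phi> x \<partial>lborel) =
        - (\<integral>x. ((s powr (real CARD('n) / p) * s) *\<^sub>R g (s *\<^sub>R x)) $ i * \<phi> x \<partial>lborel)"
  proof -
    have "integrable lborel (\<lambda>x. u (s *\<^sub>R x) * partial_deriv i \<psi> (s *\<^sub>R x))"
      "integrable lborel (\<lambda>x. g (s *\<^sub>R x) $ i * \<psi> (s *\<^sub>R x))"
      using wu(1,2) lborel_integrable_scale_iff[OF _ s, of "\<lambda>y. u y * partial_deriv i \<psi> y"]
        lborel_integrable_scale_iff[OF _ s, of "\<lambda>y. g y $ i * \<psi> y"] by simp_all
    moreover have "(\<integral>x. u (s *\<^sub>R x) * partial_deriv i \<psi> (s *\<^sub>R x) \<partial>lborel)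
        = - (\<integral>x. g (s *\<^sub>R x) $ i * \<psi> (s *\<^sub>R x) \<partial>lborel)"
      using wu(3) lborel_integral_scale[OF _ s, of "\<lambda>y. u y * partial_deriv i \<psi> y"]
        lborel_integral_scale[OF _ s, of "\<lambda>y. g y $ i * \<psi> y"] by simp
    ultimately show ?thesis
      unfolding K_def[symmetric] e1 e2 by simp
  qed
qed

lemma
  fixes u :: "real^'n::finite \<Rightarrow> real"
  assumes p: "0 < p" and s: "0 < s" and r: "0 < r" and [measurable]: "u \<in> borel_measurable borel"
  shows integrable_abs_powr_dilation_iff:
      "integrable lborel (\<lambda>x. \<bar>dilation p s u x\<bar> powr r) \<longleftrightarrow> integrable lborel (\<lambda>x. \<bar>u x\<bar> powr r)"
    and Lnorm_powr_dilation:
      "Lnorm r (dilation p s u) powr r = s powr (real CARD('n) * (r - p) / p) * Lnorm r u powr r"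
proof -
  define N where "N = real CARD('n)"
  have eq: "\<bar>dilation p s u x\<bar> powr r = s powr (N * r / p) * \<bar>u (s *\<^sub>R x)\<bar> powr r" for x
    unfolding dilation_def N_def using s r by (simp add: abs_mult powr_mult powr_powr)
  show "integrable lborel (\<lambda>x. \<bar>dilation p s u x\<bar> powr r) \<longleftrightarrow> integrable lborel (\<lambda>x. \<bar>u x\<bar> powr r)"
    unfolding eq using lborel_integrable_scale_iff[OF _ s, of "\<lambda>y. \<bar>u y\<bar> powr r"] s by simp
  have "Lnorm r (dilation p s u) powr r = s powr (N * r / p) * ((\<integral>x. \<bar>u x\<bar> powr r \<partial>lborel) / s powr N)"
    unfolding Lnorm_powr_eq_integral[OF r] eq
    using lborel_integral_scale[OF _ s, of "\<lambda>y. \<bar>u y\<bar> powr r"] by (simp add: N_def)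
  also have "\<dots> = (s powr (N * r / p) / s powr N) * Lnorm r u powr r"
    using Lnorm_powr_eq_integral[OF r, of u] by simp
  also have "s powr (N * r / p) / s powr N = s powr (N * (r - p) / p)"
    using s p by (simp add: powr_diff[symmetric] field_simps)
  finally show "Lnorm r (dilation p s u) powr r = s powr (real CARD('n) * (r - p) / p) * Lnorm r u powr r"
    by (simp add: N_def)
qed

lemma
  fixes u :: "real^'n::finite \<Rightarrow> real"
  assumes p: "1 \<le> p" and s: "0 < s" and W: "W1p p u"
  shows W1p_dilation: "W1p p (dilation p s u)"
    and gnorm_dilation: "gnorm p (dilation p s u) = s * gnorm p u"
proof -
  define N where "N = real CARD('n)"
  define G where "G x = (s powr (N / p) * s) *\<^sub>R grad p u (s *\<^sub>R x)" for x
  have p0: "0 < p" using p by simp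
  have um [measurable]: "u \<in> borel_measurable borel" and [measurable]: "grad p u \<in> borel_measurable borel"
    using W grad_borel_measurable[OF W] unfolding W1p_def in_Lp_def by simp_all
  have wg: "weak_gradient (dilation p s u) G"
    unfolding G_def N_def using weak_gradient_dilation[OF s _ _ weak_gradient_grad[OF W]] by simp
  have nG: "norm (G x) powr p = s powr N * s powr p * norm (grad p u (s *\<^sub>R x)) powr p" for x
    unfolding G_def using s p0 by (simp add: powr_mult powr_powr)
  have [measurable]: "(\<lambda>y. norm (grad p u y) powr p) \<in> borel_measurable borel"
    by measurable
  have iG: "integrable lborel (\<lambda>x. norm (G x) powr p)"
    unfolding nG using lborel_integrable_scale_iff[OF _ s, of "\<lambda>y. norm (grad p u y) powr p"]
      integrable_norm_grad_powr[OF W] by simp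
  have "integrable lborel (\<lambda>x. \<bar>dilation p s u x\<bar> powr p)"
    using W integrable_abs_powr_dilation_iff[OF p0 s p0 um] unfolding W1p_def in_Lp_def by simp
  moreover have "dilation p s u \<in> borel_measurable lborel"
    unfolding dilation_def by simp
  ultimately have "in_Lp p (dilation p s u)"
    unfolding in_Lp_def by simp
  moreover have Gm: "G \<in> borel_measurable lborel" unfolding G_def by simp
  ultimately show W1p: "W1p p (dilation p s u)"
    unfolding W1p_def using wg iG by auto
  have "gnorm p (dilation p s u) = (\<integral>x. norm (G x) powr p \<partial>lborel) powr (1 / p)"
    by (rule gnorm_eq_weak_gradient[OF p W1p wg Gm iG])
  also have "(\<integral>x. norm (G x) powr p \<partial>lborel) = s powr p * (\<integral>x. norm (grad p u x) powr p \<partial>lborel)"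
    unfolding nG using lborel_integral_scale[OF _ s, of "\<lambda>y. norm (grad p u y) powr p"] s
    by (simp add: N_def)
  also have "(s powr p * (\<integral>x. norm (grad p u x) powr p \<partial>lborel)) powr (1 / p) = s * gnorm p u"
    unfolding gnorm_def using s p0 by (simp add: powr_mult powr_powr integral_nonneg)
  finally show "gnorm p (dilation p s u) = s * gnorm p u" .
qed

section \<open>The mass-constrained problem\<close>

locale sobolev_critical_problem =
  fixes dim :: "'n::finite itself" and p q a \<mu> ps \<gamma>\<^sub>q :: real
  defines "ps \<equiv> crit_exp CARD('n) p" and "\<gamma>\<^sub>q \<equiv> gamma_q CARD('n) p q"
  assumes dim: "CARD('n) \<ge> 2" and p: "1 < p" and p_less_N: "p < real CARD('n)"
    and p_less_q: "p < q" and q_upper: "q < p + p\<^sup>2 / real CARD('n)"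
    and a: "0 < a" and \<mu>: "0 < \<mu>"
    and smallness: "\<mu> * a powr (q * (1 - \<gamma>\<^sub>q)) < alpha_const dim p q"
begin

abbreviation S :: real where "S \<equiv> sobolev_const dim p"
abbreviation C :: real where "C \<equiv> GN_const dim p q"

lemma
  shows p_pos: "0 < p" and q_pos: "0 < q" and \<gamma>\<^sub>q_pos: "0 < \<gamma>\<^sub>q"
    and q\<gamma>\<^sub>q_pos: "0 < q * \<gamma>\<^sub>q" and q\<gamma>\<^sub>q_less_p: "q * \<gamma>\<^sub>q < p"
    and p_less_ps: "p < ps" and q_less_ps: "q < ps"
    and q\<gamma>\<^sub>q_eq: "q * \<gamma>\<^sub>q = real CARD('n) * (q - p) / p"
    and ps_eq: "real CARD('n) * (ps - p) / p = ps"
proof -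
  define N where "N = real CARD('n)"
  have N: "2 \<le> N" "p < N" "q < p + p\<^sup>2 / N" using dim p_less_N q_upper unfolding N_def by auto
  show "0 < p" "0 < q" using p p_less_q by auto
  show q\<gamma>\<^sub>q: "q * \<gamma>\<^sub>q = real CARD('n) * (q - p) / p"
    using p p_less_q by (simp add: \<gamma>\<^sub>q_def gamma_q_def)
  show "0 < \<gamma>\<^sub>q" using p p_less_q N unfolding N_def by (simp add: \<gamma>\<^sub>q_def gamma_q_def)
  then show "0 < q * \<gamma>\<^sub>q" using p p_less_q by simp
  have q_p: "q - p < p\<^sup>2 / N" using N by simp
  then have "N * (q - p) < p\<^sup>2" using N by (simp add: less_divide_eq mult.commute)
  then show "q * \<gamma>\<^sub>q < p" unfolding q\<gamma>\<^sub>q N_def[symmetric] using p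
    by (simp add: divide_less_eq power2_eq_square)
  have "p\<^sup>2 / N < p\<^sup>2 / (N - p)" using N p by (intro divide_strict_left_mono) auto
  also have "\<dots> = ps - p" using N p unfolding N_def ps_def crit_exp_def by (simp add: field_simps power2_eq_square)
  finally show "q < ps" using q_p by simp
  show "p < ps" using N p unfolding N_def ps_def crit_exp_def by (simp add: less_divide_eq algebra_simps)
  show "real CARD('n) * (ps - p) / p = ps"
    using N p unfolding N_def ps_def crit_exp_def by (simp add: field_simps)
qed

lemma S_le_quotient:
  fixes u :: "real^'n \<Rightarrow> real"
  assumes "W1p p u" "\<not> (AE x in lborel. u x = 0)"
  shows "S \<le> gnorm p u powr p / Lnorm ps u powr p"
  unfolding sobolev_const_def ps_def using assms
  by (intro cInf_lower) (auto intro!: bdd_belowI[of _ 0])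

lemma S_nonneg: "0 \<le> S"
  unfolding sobolev_const_def
  using W1p_test_fun[OF test_fun_bump p_pos] bump_not_AE_zero
  by (intro cInf_greatest) auto

text \<open>\<open>alpha1\<close> is the constant \<open>C'\<close> of the paper. Since \<open>\<alpha>(N,p,q) \<le> C'\<close> is positive, the
  optimal constants are positive: \<open>C'\<close> vanishes if \<open>S = 0\<close> and is nonpositive if \<open>C \<le> 0\<close>.\<close>

definition alpha1 :: real where
  "alpha1 = (ps * S powr (ps / p) * (p - q * \<gamma>\<^sub>q) / (p * (ps - q * \<gamma>\<^sub>q))) powr ((p - q * \<gamma>\<^sub>q) / (ps - p))
     * (q * (ps - p)) / (p * C * (ps - q * \<gamma>\<^sub>q))"

lemma \<mu>_less_alpha1: "\<mu> * a powr (q * (1 - \<gamma>\<^sub>q)) < alpha1"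
proof -
  have "alpha_const dim p q \<le> alpha1"
    unfolding alpha_const_def Let_def alpha1_def ps_def \<gamma>\<^sub>q_def by simp
  then show ?thesis using smallness by simp
qed

lemma alpha1_pos: "0 < alpha1"
  using \<mu>_less_alpha1 \<mu> a by (smt (verit) mult_pos_pos powr_gt_zero)

lemma S_pos: "0 < S"
proof (rule ccontr)
  assume "\<not> 0 < S"
  then have "S = 0" using S_nonneg by simp
  then have "alpha1 = 0" unfolding alpha1_def using p_less_ps p_pos by simp
  then show False using alpha1_pos by simp
qed

lemma C_pos: "0 < C"
proof (rule ccontr)
  assume "\<not> 0 < C"
  then have "p * C * (ps - q * \<gamma>\<^sub>q) \<le> 0"
    using p_pos p_less_ps q\<gamma>\<^sub>q_less_p by (simp add: mult_nonpos_nonneg mult_nonneg_nonpos)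
  then have "alpha1 \<le> 0"
    unfolding alpha1_def using q_pos p_less_ps by (simp add: divide_nonneg_nonpos)
  then show False using alpha1_pos by simp
qed

lemma
  fixes u :: "real^'n \<Rightarrow> real"
  assumes W: "W1p p u" and nz: "\<not> (AE x in lborel. u x = 0)"
  shows Lnorm_ps_pos: "0 < Lnorm ps u"
    and gnorm_pos: "0 < gnorm p u"
    and integrable_abs_powr_ps: "integrable lborel (\<lambda>x. \<bar>u x\<bar> powr ps)"
    and sobolev_inequality: "Lnorm ps u powr ps \<le> gnorm p u powr ps / S powr (ps / p)"
proof -
  have quotient: "S \<le> gnorm p u powr p / Lnorm ps u powr p" by (rule S_le_quotient[OF W nz])
  show L0: "0 < Lnorm ps u"
    using quotient S_pos Lnorm_nonneg[of ps u] by (cases "Lnorm ps u = 0") auto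
  then have SL: "S * Lnorm ps u powr p \<le> gnorm p u powr p"
    using quotient by (simp add: le_divide_eq)
  then have "0 < gnorm p u powr p" using S_pos L0 by (smt (verit) mult_pos_pos powr_gt_zero)
  then show "0 < gnorm p u" using gnorm_nonneg[of p u] by (cases "gnorm p u = 0") auto
  show "integrable lborel (\<lambda>x. \<bar>u x\<bar> powr ps)"
    using L0 not_integrable_integral_eq unfolding Lnorm_def by fastforce
  have "Lnorm ps u powr p \<le> gnorm p u powr p / S" using SL S_pos by (simp add: field_simps)
  then have "(Lnorm ps u powr p) powr (ps / p) \<le> (gnorm p u powr p / S) powr (ps / p)"
    using p_less_ps p_pos by (intro powr_mono2) auto
  then show "Lnorm ps u powr ps \<le> gnorm p u powr ps / S powr (ps / p)"
    using p_pos S_pos by (simp add: powr_powr powr_divide)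
qed

lemma Lnorm_p_pos:
  fixes u :: "real^'n \<Rightarrow> real"
  assumes W: "W1p p u" and nz: "\<not> (AE x in lborel. u x = 0)"
  shows "0 < Lnorm p u"
proof -
  have "integrable lborel (\<lambda>x. \<bar>u x\<bar> powr p)" using W unfolding W1p_def in_Lp_def by auto
  then have "(\<integral>x. \<bar>u x\<bar> powr p \<partial>lborel) \<noteq> 0" using integral_abs_powr_eq_0_iff nz by blast
  then show ?thesis
    using Lnorm_powr_eq_integral[OF p_pos, of u] Lnorm_nonneg[of p u] by (cases "Lnorm p u = 0") auto
qed

lemma
  fixes u :: "real^'n \<Rightarrow> real"
  assumes W: "W1p p u" and nz: "\<not> (AE x in lborel. u x = 0)"
  shows integrable_abs_powr_q: "integrable lborel (\<lambda>x. \<bar>u x\<bar> powr q)"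
    and Lnorm_q_le:
      "Lnorm q u powr q \<le> gnorm p u powr (q * \<gamma>\<^sub>q) * Lnorm p u powr (q * (1 - \<gamma>\<^sub>q)) / S powr (q * \<gamma>\<^sub>q / p)"
proof -
  define \<theta> where "\<theta> = (ps - q) / (ps - p)"
  have \<theta>: "0 < \<theta>" "\<theta> < 1"
    unfolding \<theta>_def using p_less_q q_less_ps p_less_ps by (auto simp: field_simps)
  have one_minus: "1 - \<theta> = (q - p) / (ps - p)"
    unfolding \<theta>_def using p_less_ps by (simp add: field_simps)
  have "ps - p = p * ps / real CARD('n)"
    using ps_eq p_pos dim by (simp add: field_simps)
  then have ps_\<theta>: "ps * (1 - \<theta>) = q * \<gamma>\<^sub>q"
    unfolding one_minus q\<gamma>\<^sub>q_eq using p_pos p_less_ps by (simp add: field_simps)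
  have "p * (ps - q) + ps * (q - p) = q * (ps - p)" by (simp add: algebra_simps)
  then have exponents: "p * \<theta> + ps * (1 - \<theta>) = q"
    unfolding one_minus unfolding \<theta>_def using p_less_ps by (simp add: add_divide_distrib[symmetric])
  then have p_\<theta>: "p * \<theta> = q * (1 - \<gamma>\<^sub>q)"
    using ps_\<theta> by (simp add: algebra_simps)
  have [measurable]: "u \<in> borel_measurable borel" and int_p: "integrable lborel (\<lambda>x. \<bar>u x\<bar> powr p)"
    using W unfolding W1p_def in_Lp_def by auto
  have eq: "\<bar>u x\<bar> powr q = (\<bar>u x\<bar> powr p) powr \<theta> * (\<bar>u x\<bar> powr ps) powr (1 - \<theta>)" for x
    by (simp add: powr_powr powr_add[symmetric] exponents)
  show "integrable lborel (\<lambda>x. \<bar>u x\<bar> powr q)"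
    unfolding eq using int_p integrable_abs_powr_ps[OF W nz] \<theta>
    by (intro integrable_powr_interpolation) auto
  have "Lnorm q u powr q \<le> (\<integral>x. \<bar>u x\<bar> powr p \<partial>lborel) powr \<theta> * (\<integral>x. \<bar>u x\<bar> powr ps \<partial>lborel) powr (1 - \<theta>)"
    unfolding Lnorm_powr_eq_integral[OF q_pos] eq using int_p integrable_abs_powr_ps[OF W nz] \<theta>
    by (intro integral_powr_interpolation_le) auto
  also have "\<dots> = Lnorm p u powr (q * (1 - \<gamma>\<^sub>q)) * (Lnorm ps u powr ps) powr (1 - \<theta>)"
    using p_pos p_less_ps by (simp add: Lnorm_powr_eq_integral[symmetric] powr_powr p_\<theta>)
  also have "\<dots> \<le> Lnorm p u powr (q * (1 - \<gamma>\<^sub>q)) * (gnorm p u powr ps / S powr (ps / p)) powr (1 - \<theta>)"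
    using sobolev_inequality[OF W nz] \<theta> by (intro mult_left_mono powr_mono2) auto
  also have "\<dots> = gnorm p u powr (q * \<gamma>\<^sub>q) * Lnorm p u powr (q * (1 - \<gamma>\<^sub>q)) / S powr (q * \<gamma>\<^sub>q / p)"
    using S_pos p_pos by (simp add: powr_divide powr_powr ps_\<theta> field_simps)
  finally show "Lnorm q u powr q \<le> gnorm p u powr (q * \<gamma>\<^sub>q) * Lnorm p u powr (q * (1 - \<gamma>\<^sub>q)) / S powr (q * \<gamma>\<^sub>q / p)" .
qed

lemma gagliardo_nirenberg:
  fixes u :: "real^'n \<Rightarrow> real"
  assumes W: "W1p p u" and nz: "\<not> (AE x in lborel. u x = 0)"
  shows "Lnorm q u powr q \<le> C * gnorm p u powr (q * \<gamma>\<^sub>q) * Lnorm p u powr (q * (1 - \<gamma>\<^sub>q))"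
proof -
  let ?quotient = "\<lambda>u :: real^'n \<Rightarrow> real.
    Lnorm q u powr q / (gnorm p u powr (q * \<gamma>\<^sub>q) * Lnorm p u powr (q * (1 - \<gamma>\<^sub>q)))"
  have bound: "?quotient v \<le> 1 / S powr (q * \<gamma>\<^sub>q / p)"
    if "W1p p v" "\<not> (AE x in lborel. v x = 0)" for v :: "real^'n \<Rightarrow> real"
    using Lnorm_q_le[OF that] gnorm_pos[OF that] Lnorm_p_pos[OF that] S_pos
    by (simp add: divide_le_eq field_simps)
  have "?quotient u \<le> C"
    unfolding GN_const_def \<gamma>\<^sub>q_def[symmetric] using W nz bound
    by (intro cSup_upper) (auto intro!: bdd_aboveI)
  then show ?thesis
    using gnorm_pos[OF W nz] Lnorm_p_pos[OF W nz] by (simp add: divide_le_eq mult.assoc)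
qed

abbreviation kinetic :: "(real^'n \<Rightarrow> real) \<Rightarrow> real" where
  "kinetic u \<equiv> gnorm p u powr p"

abbreviation subcritical :: "(real^'n \<Rightarrow> real) \<Rightarrow> real" where
  "subcritical u \<equiv> Lnorm q u powr q"

abbreviation critical :: "(real^'n \<Rightarrow> real) \<Rightarrow> real" where
  "critical u \<equiv> Lnorm ps u powr ps"

abbreviation fiber :: "(real^'n \<Rightarrow> real) \<Rightarrow> real \<Rightarrow> real" where
  "fiber u \<equiv> three_powers p (q * \<gamma>\<^sub>q) ps (kinetic u) (\<mu> * \<gamma>\<^sub>q * subcritical u) (critical u)"

abbreviation fiber_k :: "(real^'n \<Rightarrow> real) \<Rightarrow> real \<Rightarrow> real" where
  "fiber_k u \<equiv> two_powers p (q * \<gamma>\<^sub>q) ps (kinetic u) (critical u)"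

abbreviation fiber_s0 :: "(real^'n \<Rightarrow> real) \<Rightarrow> real" where
  "fiber_s0 u \<equiv> two_powers_argmax p (q * \<gamma>\<^sub>q) ps (kinetic u) (critical u)"

lemma mem_Sa_D:
  fixes u :: "real^'n \<Rightarrow> real"
  assumes "u \<in> Sa dim p a"
  shows "W1p p u" and "\<not> (AE x in lborel. u x = 0)" and "Lnorm p u = a"
proof -
  show W: "W1p p u" using assms unfolding Sa_def by simp
  have "Lnorm p u powr p = a powr p" using assms unfolding Sa_def by simp
  then have "(Lnorm p u powr p) powr (1 / p) = (a powr p) powr (1 / p)" by simp
  then show L: "Lnorm p u = a"
    using p_pos a Lnorm_nonneg[of p u] by (simp add: powr_powr)
  have "integrable lborel (\<lambda>x. \<bar>u x\<bar> powr p)" using W unfolding W1p_def in_Lp_def by simp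
  moreover have "(\<integral>x. \<bar>u x\<bar> powr p \<partial>lborel) \<noteq> 0"
    using Lnorm_powr_eq_integral[OF p_pos, of u] L powr_gt_zero[of a p] a by simp
  ultimately show "\<not> (AE x in lborel. u x = 0)" using integral_abs_powr_eq_0_iff by blast
qed

lemma
  fixes u :: "real^'n \<Rightarrow> real"
  assumes "u \<in> Sa dim p a"
  shows kinetic_pos: "0 < kinetic u" and subcritical_pos: "0 < subcritical u"
    and critical_pos: "0 < critical u"
proof -
  note u = mem_Sa_D[OF assms]
  show "0 < kinetic u" "0 < critical u" using gnorm_pos[OF u(1,2)] Lnorm_ps_pos[OF u(1,2)] by simp_all
  have "(\<integral>x. \<bar>u x\<bar> powr q \<partial>lborel) \<noteq> 0"
    using integral_abs_powr_eq_0_iff[OF integrable_abs_powr_q[OF u(1,2)]] u(2) by blast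
  then show "0 < subcritical u"
    using Lnorm_powr_eq_integral[OF q_pos, of u] by (simp add: less_le integral_nonneg)
qed

lemma gnorm_pos_Sa: "u \<in> Sa dim p a \<Longrightarrow> 0 < gnorm p u"
  using gnorm_pos mem_Sa_D by blast

lemma power_fiber_Sa:
  "u \<in> Sa dim p a \<Longrightarrow> power_fiber p (q * \<gamma>\<^sub>q) ps (kinetic u) (\<mu> * \<gamma>\<^sub>q * subcritical u) (critical u)"
  using q\<gamma>\<^sub>q_pos q\<gamma>\<^sub>q_less_p p_less_ps kinetic_pos critical_pos subcritical_pos \<mu> \<gamma>\<^sub>q_pos
  by unfold_locales auto

lemma energy_eq_fiber: "energy dim p q \<mu> u = fiber u 1"
  using q_pos \<gamma>\<^sub>q_pos by (simp add: energy_def three_powers_def ps_def Let_def)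

lemma pohozaev_eq_fiber_k: "pohozaev dim p q \<mu> u = fiber_k u 1 - \<mu> * \<gamma>\<^sub>q * subcritical u"
  by (simp add: pohozaev_def two_powers_def ps_def \<gamma>\<^sub>q_def Let_def)

lemma pohozaev_second_eq:
  "pohozaev_second dim p q \<mu> u
     = p * kinetic u - q * \<gamma>\<^sub>q * (\<mu> * \<gamma>\<^sub>q * subcritical u) - ps * critical u"
  by (simp add: pohozaev_second_def ps_def \<gamma>\<^sub>q_def Let_def power2_eq_square algebra_simps)

lemma
  fixes u :: "real^'n \<Rightarrow> real"
  assumes u: "u \<in> Sa dim p a" and s: "0 < s"
  shows dilation_in_Sa: "dilation p s u \<in> Sa dim p a"
    and kinetic_dilation: "kinetic (dilation p s u) = s powr p * kinetic u"
    and subcritical_dilation: "subcritical (dilation p s u) = s powr (q * \<gamma>\<^sub>q) * subcritical u"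
    and critical_dilation: "critical (dilation p s u) = s powr ps * critical u"
proof -
  note W = mem_Sa_D(1)[OF u]
  have um: "u \<in> borel_measurable borel" using W unfolding W1p_def in_Lp_def by simp
  have "Lnorm p (dilation p s u) powr p = Lnorm p u powr p"
    using Lnorm_powr_dilation[OF p_pos s p_pos um] s by simp
  then show "dilation p s u \<in> Sa dim p a"
    using u W1p_dilation[OF _ s W] p unfolding Sa_def by simp
  show "kinetic (dilation p s u) = s powr p * kinetic u"
    using gnorm_dilation[OF _ s W] p s gnorm_nonneg[of p u] by (simp add: powr_mult)
  show "subcritical (dilation p s u) = s powr (q * \<gamma>\<^sub>q) * subcritical u"
    using Lnorm_powr_dilation[OF p_pos s q_pos um] q\<gamma>\<^sub>q_eq by simp
  show "critical (dilation p s u) = s powr ps * critical u"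
    using Lnorm_powr_dilation[OF p_pos s _ um, of ps] p_pos p_less_ps ps_eq by simp
qed

lemma
  fixes u :: "real^'n \<Rightarrow> real"
  assumes u: "u \<in> Sa dim p a" and s: "0 < s"
  shows energy_dilation: "energy dim p q \<mu> (dilation p s u) = fiber u s"
    and pohozaev_dilation:
      "pohozaev dim p q \<mu> (dilation p s u) = s powr (q * \<gamma>\<^sub>q) * (fiber_k u s - \<mu> * \<gamma>\<^sub>q * subcritical u)"
    and pohozaev_second_dilation:
      "pohozaev_second dim p q \<mu> (dilation p s u)
        = p * kinetic u * s powr p - q * \<gamma>\<^sub>q * (\<mu> * \<gamma>\<^sub>q * subcritical u) * s powr (q * \<gamma>\<^sub>q)
          - ps * critical u * s powr ps"
proof -
  have split: "s powr (q * \<gamma>\<^sub>q) * s powr (p - q * \<gamma>\<^sub>q) = s powr p"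
    "s powr (q * \<gamma>\<^sub>q) * s powr (ps - q * \<gamma>\<^sub>q) = s powr ps"
    using s by (simp_all add: powr_add[symmetric])
  note dil = kinetic_dilation[OF u s] subcritical_dilation[OF u s] critical_dilation[OF u s]
  show "energy dim p q \<mu> (dilation p s u) = fiber u s"
    unfolding energy_eq_fiber dil three_powers_def by (simp add: algebra_simps)
  show "pohozaev dim p q \<mu> (dilation p s u) = s powr (q * \<gamma>\<^sub>q) * (fiber_k u s - \<mu> * \<gamma>\<^sub>q * subcritical u)"
    unfolding pohozaev_eq_fiber_k dil two_powers_def by (simp add: algebra_simps split[symmetric])
  show "pohozaev_second dim p q \<mu> (dilation p s u)
      = p * kinetic u * s powr p - q * \<gamma>\<^sub>q * (\<mu> * \<gamma>\<^sub>q * subcritical u) * s powr (q * \<gamma>\<^sub>q)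
        - ps * critical u * s powr ps"
    unfolding pohozaev_second_eq dil by (simp add: algebra_simps)
qed

text \<open>\<open>K\<close> and \<open>L\<close> are the coefficients that Gagliardo--Nirenberg and Sobolev contribute to \<open>h\<close>,
  the common lower bound of all fibres on the constraint.\<close>

abbreviation K :: real where "K \<equiv> \<mu> / q * C * a powr (q * (1 - \<gamma>\<^sub>q))"
abbreviation L :: real where "L \<equiv> 1 / (ps * S powr (ps / p))"
abbreviation h :: "real \<Rightarrow> real" where "h \<equiv> h_fun dim p q a \<mu>"
abbreviation h_k :: "real \<Rightarrow> real" where "h_k \<equiv> two_powers p (q * \<gamma>\<^sub>q) ps (1 / p) L"
abbreviation h_s0 :: real where "h_s0 \<equiv> two_powers_argmax p (q * \<gamma>\<^sub>q) ps (1 / p) L"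

lemma h_eq: "h t = 1 / p * t powr p - K * t powr (q * \<gamma>\<^sub>q) - L * t powr ps"
  by (simp add: h_fun_def ps_def \<gamma>\<^sub>q_def Let_def)

lemma power_fiber_h: "power_fiber p (q * \<gamma>\<^sub>q) ps (1 / p) K L"
  using q\<gamma>\<^sub>q_pos q\<gamma>\<^sub>q_less_p p_less_ps p_pos q_pos \<mu> a C_pos S_pos by unfold_locales auto

lemma h_eq_h_k: "0 < t \<Longrightarrow> h t = t powr (q * \<gamma>\<^sub>q) * (h_k t - K)"
  unfolding h_eq two_powers_def
  by (simp add: algebra_simps powr_add[symmetric])

lemma fiber_ge_h:
  fixes u :: "real^'n \<Rightarrow> real"
  assumes u: "u \<in> Sa dim p a" and s: "0 \<le> s"
  shows "h (s * gnorm p u) \<le> fiber u s"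
proof -
  note W = mem_Sa_D[OF u]
  have G0: "0 < gnorm p u" by (rule gnorm_pos[OF W(1,2)])
  have "\<mu> / q * subcritical u * s powr (q * \<gamma>\<^sub>q) \<le> \<mu> / q * (C * gnorm p u powr (q * \<gamma>\<^sub>q) * a powr (q * (1 - \<gamma>\<^sub>q))) * s powr (q * \<gamma>\<^sub>q)"
    using gagliardo_nirenberg[OF W(1,2)] W(3) \<mu> q_pos by (intro mult_right_mono mult_left_mono) auto
  also have "\<dots> = K * (s * gnorm p u) powr (q * \<gamma>\<^sub>q)" using s G0 by (simp add: powr_mult)
  finally have sub: "\<mu> / q * subcritical u * s powr (q * \<gamma>\<^sub>q) \<le> K * (s * gnorm p u) powr (q * \<gamma>\<^sub>q)" .
  have "critical u / ps * s powr ps \<le> gnorm p u powr ps / S powr (ps / p) / ps * s powr ps"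
    using sobolev_inequality[OF W(1,2)] p_pos p_less_ps by (intro mult_right_mono divide_right_mono) auto
  also have "\<dots> = L * (s * gnorm p u) powr ps" using s G0 by (simp add: powr_mult mult.commute)
  finally have crit: "critical u / ps * s powr ps \<le> L * (s * gnorm p u) powr ps" .
  have "fiber u s = kinetic u / p * s powr p - \<mu> / q * subcritical u * s powr (q * \<gamma>\<^sub>q) - critical u / ps * s powr ps"
    using \<gamma>\<^sub>q_pos q_pos by (simp add: three_powers_def)
  moreover have "(s * gnorm p u) powr p = s powr p * kinetic u" using s G0 by (simp add: powr_mult)
  ultimately show ?thesis unfolding h_eq using sub crit by (simp add: algebra_simps)
qed

lemma K_less_h_k_s0: "K < h_k h_s0"
proof -
  interpret H: power_fiber p "q * \<gamma>\<^sub>q" ps "1 / p" K L by (rule power_fiber_h)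
  define X where "X = ps * S powr (ps / p) * (p - q * \<gamma>\<^sub>q) / (p * (ps - q * \<gamma>\<^sub>q))"
  have X0: "0 < X" unfolding X_def using p_less_ps q\<gamma>\<^sub>q_less_p p_pos S_pos by simp
  have "(p - q * \<gamma>\<^sub>q) * (1 / p) / ((ps - q * \<gamma>\<^sub>q) * L) = X"
    unfolding X_def using p_less_ps q\<gamma>\<^sub>q_less_p p_pos S_pos by (simp add: field_simps)
  then have s0X: "h_s0 = X powr (1 / (ps - p))" unfolding H.s0_eq by simp
  have "h_s0 powr (ps - q * \<gamma>\<^sub>q) = h_s0 powr (p - q * \<gamma>\<^sub>q) * h_s0 powr (ps - p)"
    using H.s0_pos by (simp add: powr_add[symmetric])
  also have "h_s0 powr (ps - p) = X" unfolding s0X using X0 p_less_ps by (simp add: powr_powr)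
  finally have "h_k h_s0 = h_s0 powr (p - q * \<gamma>\<^sub>q) * (1 / p - L * X)"
    unfolding H.k_eq by (simp add: algebra_simps)
  also have "1 / p - L * X = (ps - p) / (p * (ps - q * \<gamma>\<^sub>q))"
    unfolding X_def using p_less_ps q\<gamma>\<^sub>q_less_p p_pos S_pos by (simp add: field_simps)
  also have "h_s0 powr (p - q * \<gamma>\<^sub>q) = X powr ((p - q * \<gamma>\<^sub>q) / (ps - p))"
    unfolding s0X using X0 by (simp add: powr_powr)
  finally have hk: "h_k h_s0 = X powr ((p - q * \<gamma>\<^sub>q) / (ps - p)) * ((ps - p) / (p * (ps - q * \<gamma>\<^sub>q)))" .
  have "X powr ((p - q * \<gamma>\<^sub>q) / (ps - p)) * ((ps - p) / (p * (ps - q * \<gamma>\<^sub>q))) = alpha1 * C / q"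
    unfolding alpha1_def X_def[symmetric] using C_pos q_pos p_pos p_less_ps q\<gamma>\<^sub>q_less_p
    by (simp add: field_simps)
  moreover have "K < alpha1 * C / q"
    using \<mu>_less_alpha1 C_pos q_pos by (simp add: field_simps)
  ultimately show ?thesis using hk by simp
qed

lemma h_s0_pos: "0 < h h_s0"
  using h_eq_h_k[OF power_fiber.s0_pos[OF power_fiber_h]] K_less_h_k_s0
    power_fiber.s0_pos[OF power_fiber_h] by simp

lemma
  shows R0_pos: "0 < R0 dim p q a \<mu>" and h_k_R0: "h_k (R0 dim p q a \<mu>) = K"
proof -
  interpret H: power_fiber p "q * \<gamma>\<^sub>q" ps "1 / p" K L by (rule power_fiber_h)
  obtain r0 where r0: "0 < r0" "r0 < h_s0" "h_k r0 = K"
    using H.k_eq_below_s0 K_less_h_k_s0 \<mu> q_pos C_pos a by auto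
  have "R0 dim p q a \<mu> = r0"
    unfolding R0_def
  proof (rule cInf_eq_minimum)
    show "r0 \<in> {t. 0 < t \<and> h t = 0}" using r0 h_eq_h_k[OF r0(1)] by simp
    fix z assume z: "z \<in> {t. 0 < t \<and> h t = 0}"
    show "r0 \<le> z"
    proof (rule ccontr)
      assume "\<not> r0 \<le> z"
      then have "h_k z < K" using z r0 H.k_strict_mono_below_s0[of z r0] by auto
      then show False using z h_eq_h_k[of z] by (simp add: mult_pos_neg)
    qed
  qed
  then show "0 < R0 dim p q a \<mu>" "h_k (R0 dim p q a \<mu>) = K"
    using r0 by simp_all
qed

lemma h_R0: "h (R0 dim p q a \<mu>) = 0"
  using h_eq_h_k[OF R0_pos] h_k_R0 by simp

lemma dilation_one: "dilation p 1 u = u"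
  by (simp add: dilation_def fun_eq_iff)

lemma pohozaev_second_dilation_sign:
  fixes u :: "real^'n \<Rightarrow> real"
  assumes u: "u \<in> Sa dim p a" and s: "0 < s" and k: "fiber_k u s = \<mu> * \<gamma>\<^sub>q * subcritical u"
  shows "0 < pohozaev_second dim p q \<mu> (dilation p s u) \<longleftrightarrow> s < fiber_s0 u"
    and "pohozaev_second dim p q \<mu> (dilation p s u) < 0 \<longleftrightarrow> fiber_s0 u < s"
proof -
  interpret F: power_fiber p "q * \<gamma>\<^sub>q" ps "kinetic u" "\<mu> * \<gamma>\<^sub>q * subcritical u" "critical u"
    by (rule power_fiber_Sa[OF u])
  have "\<mu> * \<gamma>\<^sub>q * subcritical u * s powr (q * \<gamma>\<^sub>q)
      = (kinetic u * s powr (p - q * \<gamma>\<^sub>q) - critical u * s powr (ps - q * \<gamma>\<^sub>q)) * s powr (q * \<gamma>\<^sub>q)"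
    using k F.k_eq by simp
  also have "\<dots> = kinetic u * (s powr (p - q * \<gamma>\<^sub>q) * s powr (q * \<gamma>\<^sub>q))
      - critical u * (s powr (ps - q * \<gamma>\<^sub>q) * s powr (q * \<gamma>\<^sub>q))"
    by (simp add: algebra_simps)
  also have "\<dots> = kinetic u * s powr p - critical u * s powr ps"
    using s by (simp add: powr_add[symmetric])
  finally have M: "\<mu> * \<gamma>\<^sub>q * subcritical u * s powr (q * \<gamma>\<^sub>q) = kinetic u * s powr p - critical u * s powr ps" .
  have "pohozaev_second dim p q \<mu> (dilation p s u)
      = p * kinetic u * s powr p - q * \<gamma>\<^sub>q * (\<mu> * \<gamma>\<^sub>q * subcritical u * s powr (q * \<gamma>\<^sub>q))
        - ps * critical u * s powr ps"
    unfolding pohozaev_second_dilation[OF u s] by (simp only: mult.assoc)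
  also have "\<dots> = s powr p * ((p - q * \<gamma>\<^sub>q) * kinetic u - (ps - q * \<gamma>\<^sub>q) * critical u * s powr (ps - p))"
    unfolding M using s by (simp add: algebra_simps powr_diff)
  finally have "pohozaev_second dim p q \<mu> (dilation p s u)
      = s powr p * ((p - q * \<gamma>\<^sub>q) * kinetic u - (ps - q * \<gamma>\<^sub>q) * critical u * s powr (ps - p))" .
  then show "0 < pohozaev_second dim p q \<mu> (dilation p s u) \<longleftrightarrow> s < fiber_s0 u"
    and "pohozaev_second dim p q \<mu> (dilation p s u) < 0 \<longleftrightarrow> fiber_s0 u < s"
    using F.below_s0_iff[OF s] F.above_s0_iff[OF s] s
    by (simp_all add: zero_less_mult_iff mult_less_0_iff)
qed

lemma P_plus_D:
  assumes "u \<in> P_plus dim p q a \<mu>"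
  shows "u \<in> Sa dim p a" and "gnorm p u < R0 dim p q a \<mu>" and "energy dim p q \<mu> u < 0"
proof -
  show u: "u \<in> Sa dim p a" using assms unfolding P_plus_def by simp
  interpret F: power_fiber p "q * \<gamma>\<^sub>q" ps "kinetic u" "\<mu> * \<gamma>\<^sub>q * subcritical u" "critical u"
    by (rule power_fiber_Sa[OF u])
  have k1: "fiber_k u 1 = \<mu> * \<gamma>\<^sub>q * subcritical u"
    using assms unfolding P_plus_def pohozaev_eq_fiber_k by simp
  then have "1 < fiber_s0 u"
    using pohozaev_second_dilation_sign(1)[OF u _ k1] assms unfolding P_plus_def dilation_one by simp
  then have neg: "fiber u s < 0" if "0 < s" "s \<le> 1" for s
    using F.Phi_neg_if_k_one[OF k1] that by simp
  show "gnorm p u < R0 dim p q a \<mu>"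
  proof (rule ccontr)
    assume "\<not> gnorm p u < R0 dim p q a \<mu>"
    then have s: "0 < R0 dim p q a \<mu> / gnorm p u" "R0 dim p q a \<mu> / gnorm p u \<le> 1"
      using R0_pos gnorm_pos_Sa[OF u] by auto
    have "h (R0 dim p q a \<mu> / gnorm p u * gnorm p u) \<le> fiber u (R0 dim p q a \<mu> / gnorm p u)"
      using fiber_ge_h[OF u, of "R0 dim p q a \<mu> / gnorm p u"] s gnorm_pos_Sa[OF u] by simp
    then show False using neg[OF s] h_R0 gnorm_pos_Sa[OF u] by simp
  qed
  show "energy dim p q \<mu> u < 0" using neg[of 1] energy_eq_fiber by simp
qed

lemma P_minus_energy_ge:
  assumes "u \<in> P_minus dim p q a \<mu>"
  shows "h h_s0 \<le> energy dim p q \<mu> u"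
proof -
  have u: "u \<in> Sa dim p a" using assms unfolding P_minus_def by simp
  interpret F: power_fiber p "q * \<gamma>\<^sub>q" ps "kinetic u" "\<mu> * \<gamma>\<^sub>q * subcritical u" "critical u"
    by (rule power_fiber_Sa[OF u])
  have k1: "fiber_k u 1 = \<mu> * \<gamma>\<^sub>q * subcritical u"
    using assms unfolding P_minus_def pohozaev_eq_fiber_k by simp
  then have "fiber_s0 u < 1"
    using pohozaev_second_dilation_sign(2)[OF u _ k1] assms unfolding P_minus_def dilation_one by simp
  have t: "0 < h_s0 / gnorm p u"
    using power_fiber.s0_pos[OF power_fiber_h] gnorm_pos_Sa[OF u] by simp
  have "h (h_s0 / gnorm p u * gnorm p u) \<le> fiber u (h_s0 / gnorm p u)"
    using fiber_ge_h[OF u, of "h_s0 / gnorm p u"] t gnorm_pos_Sa[OF u] by simp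
  also have "\<dots> \<le> max 0 (fiber u 1)"
    using F.Phi_le_max_zero_Phi_one[OF k1 \<open>fiber_s0 u < 1\<close> t] .
  finally show ?thesis
    using h_s0_pos gnorm_pos_Sa[OF u] energy_eq_fiber by simp
qed

text \<open>Every \<open>v \<in> S\<^sub>a\<close> has a dilate in \<open>\<P>\<^sup>+\<close> (the local minimum of its fibre) and one in \<open>\<P>\<^sup>-\<close>
  (the global maximum); when \<open>\<parallel>\<nabla>v\<parallel>\<^sub>p \<le> R\<^sub>0\<close> the former has no larger energy.\<close>

lemma exists_P_plus_dilate:
  assumes v: "v \<in> Sa dim p a"
  obtains w where "w \<in> P_plus dim p q a \<mu>"
    and "gnorm p v \<le> R0 dim p q a \<mu> \<Longrightarrow> energy dim p q \<mu> w \<le> energy dim p q \<mu> v"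
proof -
  interpret F: power_fiber p "q * \<gamma>\<^sub>q" ps "kinetic v" "\<mu> * \<gamma>\<^sub>q * subcritical v" "critical v"
    by (rule power_fiber_Sa[OF v])
  have t: "0 \<le> h_s0 / gnorm p v"
    using power_fiber.s0_pos[OF power_fiber_h] gnorm_pos_Sa[OF v] by simp
  have "h (h_s0 / gnorm p v * gnorm p v) \<le> fiber v (h_s0 / gnorm p v)"
    using fiber_ge_h[OF v t] .
  then have "0 < fiber v (h_s0 / gnorm p v)"
    using h_s0_pos gnorm_pos_Sa[OF v] by simp
  then obtain s1 where s1: "0 < s1" "s1 < fiber_s0 v" "fiber_k v s1 = \<mu> * \<gamma>\<^sub>q * subcritical v"
    using F.k_eq_below_s0 F.M_less_k_s0_if_Phi_pos[OF t] \<mu> \<gamma>\<^sub>q_pos subcritical_pos[OF v] by auto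
  define w where "w = dilation p s1 v"
  have wP: "w \<in> P_plus dim p q a \<mu>"
    unfolding w_def P_plus_def
    using dilation_in_Sa[OF v s1(1)] pohozaev_dilation[OF v s1(1)] s1
      pohozaev_second_dilation_sign(1)[OF v s1(1,3)] by simp
  moreover have "energy dim p q \<mu> w \<le> energy dim p q \<mu> v" if le: "gnorm p v \<le> R0 dim p q a \<mu>"
  proof -
    have \<rho>: "1 \<le> R0 dim p q a \<mu> / gnorm p v" using le gnorm_pos_Sa[OF v] by simp
    have "h (R0 dim p q a \<mu> / gnorm p v * gnorm p v) \<le> fiber v (R0 dim p q a \<mu> / gnorm p v)"
      using fiber_ge_h[OF v, of "R0 dim p q a \<mu> / gnorm p v"] \<rho> gnorm_pos_Sa[OF v] by simp
    then have "0 \<le> fiber v (R0 dim p q a \<mu> / gnorm p v)" using h_R0 gnorm_pos_Sa[OF v] by simp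
    moreover have "fiber v s1 < 0"
      using P_plus_D(3)[OF wP] energy_dilation[OF v s1(1)] unfolding w_def by simp
    ultimately have "fiber v s1 \<le> fiber v 1"
      using F.Phi_le_Phi_one_at_local_min[OF s1(3,1,2) \<rho>] by simp
    then show ?thesis
      using energy_dilation[OF v s1(1)] energy_eq_fiber unfolding w_def by simp
  qed
  ultimately show ?thesis using that by blast
qed

lemma exists_P_minus_dilate:
  assumes v: "v \<in> Sa dim p a"
  shows "\<exists>w. w \<in> P_minus dim p q a \<mu>"
proof -
  interpret F: power_fiber p "q * \<gamma>\<^sub>q" ps "kinetic v" "\<mu> * \<gamma>\<^sub>q * subcritical v" "critical v"
    by (rule power_fiber_Sa[OF v])
  have t: "0 \<le> h_s0 / gnorm p v"
    using power_fiber.s0_pos[OF power_fiber_h] gnorm_pos_Sa[OF v] by simp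
  have "h (h_s0 / gnorm p v * gnorm p v) \<le> fiber v (h_s0 / gnorm p v)"
    using fiber_ge_h[OF v t] .
  then have "0 < fiber v (h_s0 / gnorm p v)"
    using h_s0_pos gnorm_pos_Sa[OF v] by simp
  then obtain s2 where s2: "fiber_s0 v < s2" "fiber_k v s2 = \<mu> * \<gamma>\<^sub>q * subcritical v"
    using F.k_eq_above_s0 F.M_less_k_s0_if_Phi_pos[OF t] by auto
  then have "0 < s2" using F.s0_pos by simp
  then have "dilation p s2 v \<in> P_minus dim p q a \<mu>"
    unfolding P_minus_def
    using dilation_in_Sa[OF v] pohozaev_dilation[OF v] s2
      pohozaev_second_dilation_sign(2)[OF v _ s2(2)] by simp
  then show ?thesis by blast
qed

lemma Sa_nonempty: "Sa dim p a \<noteq> {}"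
proof -
  define B where "B = (\<integral>x. \<bar>(bump :: real^'n \<Rightarrow> real) x\<bar> powr p \<partial>lborel)"
  have W: "W1p p (bump :: real^'n \<Rightarrow> real)" by (rule W1p_test_fun[OF test_fun_bump p_pos])
  have "integrable lborel (\<lambda>x. \<bar>(bump :: real^'n \<Rightarrow> real) x\<bar> powr p)"
    using W unfolding W1p_def in_Lp_def by simp
  then have "B \<noteq> 0" using integral_abs_powr_eq_0_iff bump_not_AE_zero unfolding B_def by blast
  then have "0 < B" unfolding B_def by (simp add: less_le integral_nonneg)
  define c where "c = a / B powr (1 / p)"
  have "0 < c" unfolding c_def using a \<open>0 < B\<close> by simp
  then have "Lnorm p (\<lambda>x. c * (bump :: real^'n \<Rightarrow> real) x) powr p = c powr p * B"
    unfolding Lnorm_powr_eq_integral[OF p_pos] B_def by (simp add: abs_mult powr_mult)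
  also have "\<dots> = a powr p"
    unfolding c_def using a \<open>0 < B\<close> p_pos by (simp add: powr_divide powr_powr)
  finally show ?thesis
    using W1p_cmult[OF W] unfolding Sa_def by blast
qed

lemma energy_lower_bound_A_R:
  assumes "v \<in> A_R dim p a (R0 dim p q a \<mu>)"
  shows "- (K * R0 dim p q a \<mu> powr (q * \<gamma>\<^sub>q) + L * R0 dim p q a \<mu> powr ps) \<le> energy dim p q \<mu> v"
proof -
  have v: "v \<in> Sa dim p a" and le: "gnorm p v \<le> R0 dim p q a \<mu>"
    using assms unfolding A_R_def by auto
  have "h (gnorm p v) \<le> energy dim p q \<mu> v" using fiber_ge_h[OF v, of 1] energy_eq_fiber by simp
  moreover have "K * gnorm p v powr (q * \<gamma>\<^sub>q) \<le> K * R0 dim p q a \<mu> powr (q * \<gamma>\<^sub>q)"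
    using le gnorm_nonneg q\<gamma>\<^sub>q_pos \<mu> q_pos C_pos a by (intro mult_left_mono powr_mono2) auto
  moreover have "L * gnorm p v powr ps \<le> L * R0 dim p q a \<mu> powr ps"
    using le gnorm_nonneg p_less_ps p_pos S_pos by (intro mult_left_mono powr_mono2) auto
  moreover have "0 \<le> 1 / p * gnorm p v powr p" using p_pos by simp
  ultimately show ?thesis unfolding h_eq by linarith
qed

lemma
  shows m_plus_eq_Inf_A_R:
      "m_plus dim p q a \<mu> = Inf (energy dim p q \<mu> ` A_R dim p a (R0 dim p q a \<mu>))"
    and m_plus_neg: "m_plus dim p q a \<mu> < 0"
proof -
  let ?E = "energy dim p q \<mu>" and ?P = "P_plus dim p q a \<mu>" and ?A = "A_R dim p a (R0 dim p q a \<mu>)"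
  obtain v where "v \<in> Sa dim p a" using Sa_nonempty by blast
  then have P_ne: "?P \<noteq> {}" using exists_P_plus_dilate by blast
  have P_A: "?P \<subseteq> ?A" using P_plus_D unfolding A_R_def by (auto intro: less_imp_le)
  have bdd_A: "bdd_below (?E ` ?A)"
    using energy_lower_bound_A_R by (intro bdd_belowI2)
  then have bdd_P: "bdd_below (?E ` ?P)" by (rule bdd_below_mono) (use P_A in blast)
  have "Inf (?E ` ?P) \<le> Inf (?E ` ?A)"
  proof (rule cInf_greatest)
    show "?E ` ?A \<noteq> {}" using P_ne P_A by blast
    fix x assume "x \<in> ?E ` ?A"
    then obtain v where v: "v \<in> ?A" "x = ?E v" by blast
    then obtain w where w: "w \<in> ?P" "?E w \<le> ?E v"
      using exists_P_plus_dilate[of v] unfolding A_R_def by auto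
    have "Inf (?E ` ?P) \<le> ?E w" using w(1) bdd_P by (intro cInf_lower) auto
    then show "Inf (?E ` ?P) \<le> x" using w(2) v(2) by simp
  qed
  moreover have "Inf (?E ` ?A) \<le> Inf (?E ` ?P)"
    using P_ne bdd_A P_A by (intro cInf_superset_mono) auto
  ultimately show "m_plus dim p q a \<mu> = Inf (?E ` ?A)" unfolding m_plus_def by simp
  obtain u where "u \<in> ?P" using P_ne by blast
  then have "Inf (?E ` ?P) \<le> ?E u" using bdd_P by (intro cInf_lower) auto
  also have "?E u < 0" using P_plus_D(3)[OF \<open>u \<in> ?P\<close>] .
  finally show "m_plus dim p q a \<mu> < 0" unfolding m_plus_def .
qed

lemma m_minus_pos: "0 < m_minus dim p q a \<mu>"
proof -
  obtain v where "v \<in> Sa dim p a" using Sa_nonempty by blast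
  then have "P_minus dim p q a \<mu> \<noteq> {}" using exists_P_minus_dilate by blast
  then have "h h_s0 \<le> m_minus dim p q a \<mu>"
    unfolding m_minus_def using P_minus_energy_ge by (intro cInf_greatest) auto
  then show ?thesis using h_s0_pos by simp
qed

end

theorem lemma4p4:
  fixes p q a \<mu> :: real
  assumes "CARD('n::finite) \<ge> 2"
    and "1 < p" and "p < real CARD('n)"
    and "p < q" and "q < p + p\<^sup>2 / real CARD('n)"
    and "a > 0" and "\<mu> > 0"
    and "\<mu> * a powr (q * (1 - gamma_q CARD('n) p q)) < alpha_const TYPE('n) p q"
  shows "m_plus TYPE('n) p q a \<mu> =
           Inf (energy TYPE('n) p q \<mu> ` A_R TYPE('n) p a (R0 TYPE('n) p q a \<mu>))
         \<and> m_plus TYPE('n) p q a \<mu> < 0 \<and> 0 < m_minus TYPE('n) p q a \<mu>"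
proof -
  interpret sobolev_critical_problem "TYPE('n)" p q a \<mu> "crit_exp CARD('n) p" "gamma_q CARD('n) p q"
    using assms by unfold_locales simp_all
  show ?thesis using m_plus_eq_Inf_A_R m_plus_neg m_minus_pos by simp
qed

end
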